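(* Fix $p\in(0,1)$. Let $\Phi_{\mathsf{Even}}=\sum_{v\in\mathsf{Even}}2^{-N_p(v)}$, $\Phi_{\mathsf{Odd}}=\sum_{v\in\mathsf{Odd}}2^{-N_p(v)}$, $\mu_p=\tfrac12(2-p)^d$ and $\sigma_p^2=\tfrac12(\tfrac{4-3p}{2})^d$. Then, as $d\to\infty$, \[ \Big(\frac{\Phi_{\mathsf{Even}}-\mu_p}{\sigma_p},\frac{\Phi_{\mathsf{Odd}}-\mu_p}{\sigma_p}\Big)\xrightarrow{\mathrm d}\mathcal N(0,1)\otimes\mathcal N(0,1), \] i.e. the limit is a pair of independent standard normal random variables.
   Context: Setup: - $Q_d=\{0,1\}^d$ is the hypercube graph. - $\mathsf{Even}$ and $\mathsf{Odd}$ are the vertices of even and odd Hamming weight. - $Q_{d,p}$ is obtained by retaining each edge independently with probability $p$. - $N_p(v)$ is the number of neighbors of $v$ in $Q_{d,p}$. *)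

theory Defs
  imports "HOL-Probability.Probability"
begin

(* Vertices of Q_d: subsets of {..<d} (identified with 0/1 vectors via indicator). *)
definition cube_vertices :: "nat \<Rightarrow> nat set set" where
  "cube_vertices d = Pow {..<d}"

definition cube_edges :: "nat \<Rightarrow> nat set set set" where
  "cube_edges d = {{u, insert i u} | u i. u \<subseteq> {..<d} \<and> i < d \<and> i \<notin> u}"

definition even_vertices :: "nat \<Rightarrow> nat set set" where
  "even_vertices d = {v \<in> cube_vertices d. even (card v)}"

definition odd_vertices :: "nat \<Rightarrow> nat set set" where
  "odd_vertices d = {v \<in> cube_vertices d. odd (card v)}"

(* Q_{d,p}: each edge retained independently with probability p;
   an outcome is the indicator function of retained edges. *)
definition Qdp :: "nat \<Rightarrow> real \<Rightarrow> (nat set set \<Rightarrow> bool) pmf" where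
  "Qdp d p = Pi_pmf (cube_edges d) False (\<lambda>_. bernoulli_pmf p)"

definition Np :: "nat \<Rightarrow> (nat set set \<Rightarrow> bool) \<Rightarrow> nat set \<Rightarrow> nat" where
  "Np d \<omega> v = card {u \<in> cube_vertices d. {u, v} \<in> cube_edges d \<and> \<omega> {u, v}}"

definition Phi :: "nat \<Rightarrow> nat set set \<Rightarrow> (nat set set \<Rightarrow> bool) \<Rightarrow> real" where
  "Phi d S \<omega> = (\<Sum>v\<in>S. (2::real) powi (- int (Np d \<omega> v)))"

definition mu_p :: "real \<Rightarrow> nat \<Rightarrow> real" where
  "mu_p p d = (1/2) * (2 - p) ^ d"

definition sigma_p :: "real \<Rightarrow> nat \<Rightarrow> real" where
  "sigma_p p d = sqrt ((1/2) * ((4 - 3 * p) / 2) ^ d)"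

definition std_normal2 :: "(real \<times> real) measure" where
  "std_normal2 = density lborel std_normal_density \<Otimes>\<^sub>M density lborel std_normal_density"

definition conv_distr2 :: "(nat \<Rightarrow> (real \<times> real) measure) \<Rightarrow> (real \<times> real) measure \<Rightarrow> bool" where
  "conv_distr2 Ms M \<longleftrightarrow>
     (\<forall>f :: real \<times> real \<Rightarrow> real. continuous_on UNIV f \<and> bounded (range f) \<longrightarrow>
        (\<lambda>n. integral\<^sup>L (Ms n) f) \<longlonglongrightarrow> integral\<^sup>L M f)"

end

theory Submission
  imports Defs
begin

text \<open>
  The weight \<open>2 ^ (- N\<^sub>p v)\<close> is the product, over the \<open>d\<close> edges at \<open>v\<close>, of a factor \<open>1/2\<close>
  (edge retained) or \<open>1\<close>. Vertices of equal parity have disjoint stars, so each of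
  \<open>\<Phi>\<^sub>E\<^sub>v\<^sub>e\<^sub>n\<close> and \<open>\<Phi>\<^sub>O\<^sub>d\<^sub>d\<close> is a sum of \<open>2 ^ (d - 1)\<close> independent copies of a product of
  \<open>d\<close> independent factors; a third-order expansion of the characteristic function and Levy's
  continuity theorem give a central limit theorem for each of them separately.

  An even and an odd vertex share at most one edge. Resampling one edge \<open>e = {u, v}\<close> changes a
  Lipschitz function of the standardized even (odd) sum by a multiple of the product of the
  factors of the other edges at \<open>u\<close> (at \<open>v\<close>); these two products are independent with mean
  \<open>(1 - p/2) ^ (d - 1)\<close> each. Interpolating between the edge configuration and an independent copy
  therefore bounds the covariance of \<open>g X\<^sub>E\<^sub>v\<^sub>e\<^sub>n\<close> and \<open>h X\<^sub>O\<^sub>d\<^sub>d\<close>, for bounded Lipschitz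
  \<open>g\<close> and \<open>h\<close>, by a multiple of \<open>d \<rho> ^ d\<close> with \<open>\<rho> = (1 - p/2)\<^sup>2 / (1 - 3p/4) < 1\<close>.
  Finite sums of products \<open>g x * h y\<close> are uniformly dense on compact squares (Stone-Weierstrass)
  and the marginals are tight, so the convergence extends to all bounded continuous test functions.
\<close>

section \<open>Stars of the hypercube\<close>

definition incident_edges :: "nat \<Rightarrow> nat set \<Rightarrow> nat set set set" where
  "incident_edges d v = {e \<in> cube_edges d. v \<in> e}"

definition edge_factor :: "bool \<Rightarrow> real" where
  "edge_factor b = (if b then 1/2 else 1)"

definition vertex_weight :: "nat \<Rightarrow> (nat set set \<Rightarrow> bool) \<Rightarrow> nat set \<Rightarrow> real" where
  "vertex_weight d \<omega> v = (\<Prod>e\<in>incident_edges d v. edge_factor (\<omega> e))"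

lemma finite_cube_vertices [simp]: "finite (cube_vertices d)"
  by (simp add: cube_vertices_def)

lemma finite_cube_edges [simp]: "finite (cube_edges d)"
proof (rule finite_subset)
  show "cube_edges d \<subseteq> Pow (cube_vertices d)"
    by (auto simp: cube_edges_def cube_vertices_def)
qed simp

lemma finite_incident_edges [simp]: "finite (incident_edges d v)"
  by (simp add: incident_edges_def)

lemma incident_edges_subset: "incident_edges d v \<subseteq> cube_edges d"
  by (auto simp: incident_edges_def)

lemma cube_edgeE:
  assumes "e \<in> cube_edges d"
  obtains w i where "e = {w, insert i w}" "w \<subseteq> {..<d}" "i < d" "i \<notin> w"
  using assms unfolding cube_edges_def by blast

lemma cube_edge_ends_distinct: "{x, y} \<in> cube_edges d \<Longrightarrow> x \<noteq> y"
  by (auto elim!: cube_edgeE simp: doubleton_eq_iff)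

lemma cube_edge_other_endE:
  assumes "e \<in> cube_edges d" "x \<in> e"
  obtains y where "e = {x, y}" "x \<noteq> y" "y \<in> cube_vertices d"
proof -
  obtain w i where e: "e = {w, insert i w}" "w \<subseteq> {..<d}" "i < d" "i \<notin> w"
    using assms(1) by (rule cube_edgeE)
  show ?thesis
  proof (cases "x = w")
    case True
    then show ?thesis using e that[of "insert i w"] by (auto simp: cube_vertices_def)
  next
    case False
    then have "x = insert i w" using assms(2) e by auto
    then show ?thesis using e that[of w] by (auto simp: cube_vertices_def)
  qed
qed

lemma cube_edge_parityE:
  assumes "e \<in> cube_edges d"
  obtains u v where "e = {u, v}" "u \<in> even_vertices d" "v \<in> odd_vertices d"
proof -
  obtain w i where e: "e = {w, insert i w}" "w \<subseteq> {..<d}" "i < d" "i \<notin> w"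
    using assms by (rule cube_edgeE)
  have "finite w" using e(2) finite_subset by blast
  then have card: "card (insert i w) = Suc (card w)" using e(4) by simp
  have "w \<in> cube_vertices d" "insert i w \<in> cube_vertices d"
    using e by (auto simp: cube_vertices_def)
  then show ?thesis
    using that[of w "insert i w"] that[of "insert i w" w] e(1) card
    by (cases "even (card w)") (auto simp: even_vertices_def odd_vertices_def insert_commute)
qed

lemma cube_edge_incident_even_oddE:
  assumes "e \<in> cube_edges d"
  obtains u v where "u \<in> even_vertices d" "v \<in> odd_vertices d"
    "e \<in> incident_edges d u" "e \<in> incident_edges d v"
proof -
  obtain u v where "e = {u, v}" "u \<in> even_vertices d" "v \<in> odd_vertices d"
    using assms by (rule cube_edge_parityE)
  then show ?thesis using that assms by (auto simp: incident_edges_def)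
qed

lemma Np_eq_card_incident_edges: "Np d \<omega> v = card {e \<in> incident_edges d v. \<omega> e}"
proof -
  let ?N = "{u \<in> cube_vertices d. {u, v} \<in> cube_edges d \<and> \<omega> {u, v}}"
  have "bij_betw (\<lambda>u. {u, v}) ?N {e \<in> incident_edges d v. \<omega> e}"
  proof (rule bij_betwI')
    fix x y assume "x \<in> ?N" "y \<in> ?N"
    then have "x \<noteq> v" "y \<noteq> v" by (auto dest: cube_edge_ends_distinct)
    then show "({x, v} = {y, v}) = (x = y)" by (auto simp: doubleton_eq_iff)
  next
    fix x assume "x \<in> ?N"
    then show "{x, v} \<in> {e \<in> incident_edges d v. \<omega> e}" by (auto simp: incident_edges_def)
  next
    fix e assume "e \<in> {e \<in> incident_edges d v. \<omega> e}"
    then have e: "e \<in> cube_edges d" "v \<in> e" "\<omega> e" by (auto simp: incident_edges_def)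
    obtain y where "e = {v, y}" "y \<in> cube_vertices d"
      using e(1,2) by (rule cube_edge_other_endE)
    then show "\<exists>x\<in>?N. e = {x, v}"
      using e by (intro bexI[of _ y]) (auto simp: insert_commute)
  qed
  then show ?thesis unfolding Np_def by (rule bij_betw_same_card)
qed

lemma card_incident_edges:
  assumes "v \<in> cube_vertices d"
  shows "card (incident_edges d v) = d"
proof -
  define flip where "flip i = (if i \<in> v then v - {i} else insert i v)" for i
  have v: "v \<subseteq> {..<d}" using assms by (simp add: cube_vertices_def)
  have flip_neq: "flip i \<noteq> v" for i by (auto simp: flip_def)
  have "bij_betw (\<lambda>i. {v, flip i}) {..<d} (incident_edges d v)"
  proof (rule bij_betwI')
    fix i j
    show "({v, flip i} = {v, flip j}) = (i = j)"
    proof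
      assume "{v, flip i} = {v, flip j}"
      then have "flip i = flip j" using flip_neq by (auto simp: doubleton_eq_iff)
      then show "i = j" unfolding flip_def by (auto split: if_splits)
    qed simp
  next
    fix i assume i: "i \<in> {..<d}"
    show "{v, flip i} \<in> incident_edges d v"
    proof (cases "i \<in> v")
      case True
      then have "{v, flip i} = {v - {i}, insert i (v - {i})}" by (auto simp: flip_def insert_absorb)
      then show ?thesis using i v by (auto simp: incident_edges_def cube_edges_def)
    next
      case False
      then show ?thesis using i v by (auto simp: incident_edges_def cube_edges_def flip_def)
    qed
  next
    fix e assume "e \<in> incident_edges d v"
    then have e: "e \<in> cube_edges d" "v \<in> e" by (auto simp: incident_edges_def)
    obtain w i where ew: "e = {w, insert i w}" "w \<subseteq> {..<d}" "i < d" "i \<notin> w"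
      using e(1) by (rule cube_edgeE)
    then have "v = w \<or> v = insert i w" using e(2) by auto
    then show "\<exists>i\<in>{..<d}. e = {v, flip i}"
      using ew by (intro bexI[of _ i]) (auto simp: flip_def insert_commute)
  qed
  then show ?thesis using bij_betw_same_card by fastforce
qed

lemma incident_edges_disjoint:
  assumes "u \<noteq> u'" "even (card u) \<longleftrightarrow> even (card u')"
  shows "incident_edges d u \<inter> incident_edges d u' = {}"
proof (rule ccontr)
  assume "incident_edges d u \<inter> incident_edges d u' \<noteq> {}"
  then obtain e where e: "e \<in> cube_edges d" "u \<in> e" "u' \<in> e" by (auto simp: incident_edges_def)
  then obtain a b where ab: "e = {a, b}" "even (card a)" "odd (card b)"
    by (auto elim!: cube_edge_parityE simp: even_vertices_def odd_vertices_def)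
  then have "u = a \<and> u' = b \<or> u = b \<and> u' = a" using e(2,3) assms(1) by auto
  then show False using ab(2,3) assms(2) by auto
qed

lemma incident_edges_Int:
  assumes "e \<in> incident_edges d u" "e \<in> incident_edges d v" "u \<noteq> v"
  shows "incident_edges d u \<inter> incident_edges d v = {e}"
proof -
  have "e' = {u, v}" if "e' \<in> incident_edges d u" "e' \<in> incident_edges d v" for e'
  proof -
    have "e' \<in> cube_edges d" "u \<in> e'" "v \<in> e'" using that by (auto simp: incident_edges_def)
    then obtain y where "e' = {u, y}" by (elim cube_edge_other_endE)
    then show ?thesis using \<open>v \<in> e'\<close> assms(3) by auto
  qed
  then show ?thesis using assms(1,2) by blast
qed

lemma parity_class_subset:
  "W \<in> {even_vertices d, odd_vertices d} \<Longrightarrow> W \<subseteq> cube_vertices d"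
  by (auto simp: even_vertices_def odd_vertices_def)

lemma finite_parity_class:
  "W \<in> {even_vertices d, odd_vertices d} \<Longrightarrow> finite W"
  by (rule finite_subset[OF parity_class_subset finite_cube_vertices])

lemma parity_class_incident_edges_disjoint:
  assumes "W \<in> {even_vertices d, odd_vertices d}" "u \<in> W" "u' \<in> W" "u \<noteq> u'"
  shows "incident_edges d u \<inter> incident_edges d u' = {}"
  using assms by (intro incident_edges_disjoint) (auto simp: even_vertices_def odd_vertices_def)

lemma card_cube_edges_parity_class:
  assumes W: "W \<in> {even_vertices d, odd_vertices d}"
  shows "card (cube_edges d) = d * card W"
proof -
  have "(\<Union>u\<in>W. incident_edges d u) = cube_edges d"
  proof
    show "(\<Union>u\<in>W. incident_edges d u) \<subseteq> cube_edges d"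
      using incident_edges_subset by blast
    show "cube_edges d \<subseteq> (\<Union>u\<in>W. incident_edges d u)"
    proof
      fix e assume "e \<in> cube_edges d"
      then obtain u v where "u \<in> even_vertices d" "v \<in> odd_vertices d"
        "e \<in> incident_edges d u" "e \<in> incident_edges d v"
        by (rule cube_edge_incident_even_oddE)
      then show "e \<in> (\<Union>u\<in>W. incident_edges d u)" using W by auto
    qed
  qed
  then have "card (cube_edges d) = (\<Sum>u\<in>W. card (incident_edges d u))"
    using finite_parity_class[OF W] parity_class_incident_edges_disjoint[OF W]
    by (metis card_UN_disjoint finite_incident_edges)
  also have "\<dots> = (\<Sum>u\<in>W. d)"
    using parity_class_subset[OF W] by (intro sum.cong refl card_incident_edges) auto
  finally show ?thesis by simp
qed

lemma card_parity_class:
  assumes W: "W \<in> {even_vertices d, odd_vertices d}" and d: "d \<ge> 1"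
  shows "card W = 2 ^ (d - 1)"
proof -
  have "card (even_vertices d) = card (odd_vertices d)"
    using card_cube_edges_parity_class[of "even_vertices d" d]
      card_cube_edges_parity_class[of "odd_vertices d" d] d by simp
  moreover have "card (even_vertices d) + card (odd_vertices d) = card (cube_vertices d)"
  proof -
    have "card (even_vertices d \<union> odd_vertices d) = card (even_vertices d) + card (odd_vertices d)"
      using finite_parity_class[of "even_vertices d" d] finite_parity_class[of "odd_vertices d" d]
      by (intro card_Un_disjoint) (auto simp: even_vertices_def odd_vertices_def)
    moreover have "even_vertices d \<union> odd_vertices d = cube_vertices d"
      by (auto simp: even_vertices_def odd_vertices_def)
    ultimately show ?thesis by simp
  qed
  moreover have "card (cube_vertices d) = 2 * 2 ^ (d - 1)"
    using d by (simp add: cube_vertices_def card_Pow power_eq_if)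
  ultimately show ?thesis using W by auto
qed

lemma card_cube_edges: "d \<ge> 1 \<Longrightarrow> card (cube_edges d) = d * 2 ^ (d - 1)"
  using card_cube_edges_parity_class[of "even_vertices d" d] card_parity_class[of "even_vertices d" d]
  by simp

lemma prod_edge_factor:
  "finite A \<Longrightarrow> (\<Prod>e\<in>A. edge_factor (\<omega> e)) = (1/2) ^ card {e \<in> A. \<omega> e}"
  by (simp add: edge_factor_def prod.If_cases Int_def)

lemma powi_Np_eq_vertex_weight: "(2::real) powi (- int (Np d \<omega> v)) = vertex_weight d \<omega> v"
  unfolding vertex_weight_def prod_edge_factor[OF finite_incident_edges] Np_eq_card_incident_edges
  by (simp add: power_int_minus power_one_over inverse_eq_divide)

lemma Phi_eq_sum_vertex_weight: "Phi d W \<omega> = (\<Sum>v\<in>W. vertex_weight d \<omega> v)"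
  unfolding Phi_def by (simp add: powi_Np_eq_vertex_weight)

lemma edge_factor_nonneg: "0 \<le> edge_factor b"
  by (simp add: edge_factor_def)

lemma vertex_weight_nonneg: "0 \<le> vertex_weight d \<omega> v"
  unfolding vertex_weight_def by (intro prod_nonneg) (simp add: edge_factor_nonneg)

lemma vertex_weight_cong:
  "(\<And>e. e \<in> incident_edges d v \<Longrightarrow> \<omega> e = \<omega>' e) \<Longrightarrow> vertex_weight d \<omega> v = vertex_weight d \<omega>' v"
  unfolding vertex_weight_def by (intro prod.cong) auto

lemma vertex_weight_fun_upd:
  assumes "e \<in> incident_edges d v"
  shows "vertex_weight d (w(e := b)) v
    = edge_factor b * (\<Prod>e'\<in>incident_edges d v - {e}. edge_factor (w e'))"
  unfolding vertex_weight_def prod.remove[OF finite_incident_edges assms]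
  by (auto intro!: prod.cong)

section \<open>Finite product distributions\<close>

lemma finite_set_pmf_Pi_pmf [simp]:
  fixes dflt :: "'b::finite"
  assumes "finite A"
  shows "finite (set_pmf (Pi_pmf A dflt P))"
  by (rule finite_subset[OF set_Pi_pmf_subset'[OF assms]]) (use assms in auto)

declare integrable_measure_pmf_finite [simp]

lemma integral_pair_pmf_finite:
  fixes f :: "'a \<times> 'b \<Rightarrow> 'c::{banach, second_countable_topology}"
  assumes A: "finite (set_pmf A)" and B: "finite (set_pmf B)"
  shows "integral\<^sup>L (pair_pmf A B) f = integral\<^sup>L A (\<lambda>a. integral\<^sup>L B (\<lambda>b. f (a, b)))"
proof -
  have "integral\<^sup>L (pair_pmf A B) f = (\<Sum>x\<in>set_pmf A \<times> set_pmf B. pmf (pair_pmf A B) x *\<^sub>R f x)"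
    by (rule integral_measure_pmf) (use A B in auto)
  also have "\<dots> = (\<Sum>a\<in>set_pmf A. \<Sum>b\<in>set_pmf B. (pmf A a * pmf B b) *\<^sub>R f (a, b))"
    unfolding sum.cartesian_product by (intro sum.cong refl) (auto simp: pmf_pair)
  also have "\<dots> = (\<Sum>a\<in>set_pmf A. pmf A a *\<^sub>R (\<Sum>b\<in>set_pmf B. pmf B b *\<^sub>R f (a, b)))"
    by (simp add: scaleR_sum_right)
  also have "\<dots> = (\<Sum>a\<in>set_pmf A. pmf A a *\<^sub>R integral\<^sup>L B (\<lambda>b. f (a, b)))"
    by (intro sum.cong refl arg_cong2[where f=scaleR] integral_measure_pmf[symmetric]) (use B in auto)
  also have "\<dots> = integral\<^sup>L A (\<lambda>a. integral\<^sup>L B (\<lambda>b. f (a, b)))"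
    by (rule integral_measure_pmf[symmetric]) (use A in auto)
  finally show ?thesis .
qed

lemma integral_pair_pmf_finite':
  fixes f :: "'a \<times> 'b \<Rightarrow> 'c::{banach, second_countable_topology}"
  assumes A: "finite (set_pmf A)" and B: "finite (set_pmf B)"
  shows "integral\<^sup>L (pair_pmf A B) f = integral\<^sup>L B (\<lambda>b. integral\<^sup>L A (\<lambda>a. f (a, b)))"
proof -
  have "integral\<^sup>L (pair_pmf A B) f = integral\<^sup>L (pair_pmf B A) (\<lambda>(b, a). f (a, b))"
    by (simp add: pair_commute_pmf[of A B] case_prod_unfold)
  also have "\<dots> = integral\<^sup>L B (\<lambda>b. integral\<^sup>L A (\<lambda>a. f (a, b)))"
    by (subst integral_pair_pmf_finite[OF B A]) simp
  finally show ?thesis .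
qed

lemma integral_pair_pmf_mult:
  fixes \<phi> :: "'a \<Rightarrow> 'c::{real_normed_field, banach, second_countable_topology}"
  assumes A: "finite (set_pmf A)" and B: "finite (set_pmf B)"
  shows "integral\<^sup>L (pair_pmf A B) (\<lambda>(a, b). \<phi> a * \<psi> b) = integral\<^sup>L A \<phi> * integral\<^sup>L B \<psi>"
  by (subst integral_pair_pmf_finite[OF A B]) simp

lemma expectation_prod_Pi_pmf_blocks:
  fixes f :: "'u \<Rightarrow> ('e \<Rightarrow> bool) \<Rightarrow> 'c::{real_normed_field, banach, second_countable_topology}"
  assumes "finite W" "finite E" "\<And>u. u \<in> W \<Longrightarrow> T u \<subseteq> E"
    and "\<And>u u'. u \<in> W \<Longrightarrow> u' \<in> W \<Longrightarrow> u \<noteq> u' \<Longrightarrow> T u \<inter> T u' = {}"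
    and "\<And>u \<omega> \<omega>'. u \<in> W \<Longrightarrow> (\<And>e. e \<in> T u \<Longrightarrow> \<omega> e = \<omega>' e) \<Longrightarrow> f u \<omega> = f u \<omega>'"
  shows "integral\<^sup>L (Pi_pmf E False P) (\<lambda>\<omega>. \<Prod>u\<in>W. f u \<omega>)
    = (\<Prod>u\<in>W. integral\<^sup>L (Pi_pmf (T u) False P) (f u))"
  using assms
proof (induction W arbitrary: E rule: finite_induct)
  case empty
  then show ?case by simp
next
  case (insert u0 W E)
  have fin: "finite (T u0)" "finite (E - T u0)"
    using insert(4) insert(5)[of u0] by (auto intro: finite_subset)
  define glue where "glue g1 g2 x = (if x \<in> T u0 then g1 x else g2 x)" for g1 g2 :: "'e \<Rightarrow> bool" and x
  have E: "E = T u0 \<union> (E - T u0)" using insert(5)[of u0] by auto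
  have split: "Pi_pmf E False P
      = map_pmf (\<lambda>(g1, g2). glue g1 g2) (pair_pmf (Pi_pmf (T u0) False P) (Pi_pmf (E - T u0) False P))"
    unfolding glue_def by (subst E, rule Pi_pmf_union) (use fin in auto)
  have glue: "(\<Prod>u\<in>insert u0 W. f u (glue g1 g2)) = f u0 g1 * (\<Prod>u\<in>W. f u g2)" for g1 g2
  proof -
    have "f u0 (glue g1 g2) = f u0 g1" by (rule insert(7)) (auto simp: glue_def)
    moreover have "f u (glue g1 g2) = f u g2" if "u \<in> W" for u
    proof (rule insert(7))
      show "u \<in> insert u0 W" using that by simp
      fix e assume "e \<in> T u"
      moreover have "T u \<inter> T u0 = {}" using insert(6)[of u u0] that insert(2) by auto
      ultimately show "glue g1 g2 e = g2 e" by (auto simp: glue_def)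
    qed
    ultimately show ?thesis using insert(1,2) by simp
  qed
  have "integral\<^sup>L (Pi_pmf E False P) (\<lambda>\<omega>. \<Prod>u\<in>insert u0 W. f u \<omega>)
      = integral\<^sup>L (pair_pmf (Pi_pmf (T u0) False P) (Pi_pmf (E - T u0) False P))
          (\<lambda>(g1, g2). f u0 g1 * (\<Prod>u\<in>W. f u g2))"
    unfolding split integral_map_pmf
    by (intro Bochner_Integration.integral_cong refl) (auto simp: glue)
  also have "\<dots> = integral\<^sup>L (Pi_pmf (T u0) False P) (f u0)
      * integral\<^sup>L (Pi_pmf (E - T u0) False P) (\<lambda>g. \<Prod>u\<in>W. f u g)"
    by (rule integral_pair_pmf_mult) (simp_all add: fin)
  also have "integral\<^sup>L (Pi_pmf (E - T u0) False P) (\<lambda>g. \<Prod>u\<in>W. f u g)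
      = (\<Prod>u\<in>W. integral\<^sup>L (Pi_pmf (T u) False P) (f u))"
  proof (rule insert(3))
    show "finite (E - T u0)" by (fact fin(2))
    fix u assume "u \<in> W"
    then show "T u \<subseteq> E - T u0" using insert(5)[of u] insert(6)[of u u0] insert(2) by auto
  next
    fix u u' assume "u \<in> W" "u' \<in> W" "u \<noteq> u'"
    then show "T u \<inter> T u' = {}" using insert(6) by auto
  next
    fix u and \<omega> \<omega>' :: "'e \<Rightarrow> bool" assume "u \<in> W" "\<And>e. e \<in> T u \<Longrightarrow> \<omega> e = \<omega>' e"
    then show "f u \<omega> = f u \<omega>'" by (intro insert(7)) auto
  qed
  finally show ?case using insert(1,2) by simp
qed

lemma Pi_pmf_pair_pmf:
  assumes "finite E"
  shows "map_pmf (\<lambda>z. (fst \<circ> z, snd \<circ> z)) (Pi_pmf E (d1, d2) (\<lambda>x. pair_pmf (P x) (Q x)))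
       = pair_pmf (Pi_pmf E d1 P) (Pi_pmf E d2 Q)"
proof (rule pmf_eqI)
  fix y :: "('a \<Rightarrow> 'b) \<times> ('a \<Rightarrow> 'c)"
  obtain f1 f2 where y: "y = (f1, f2)" by (cases y)
  have inj: "inj (\<lambda>z::'a \<Rightarrow> 'b \<times> 'c. (fst \<circ> z, snd \<circ> z))"
    by (rule injI) (auto simp: fun_eq_iff prod_eq_iff)
  have y': "y = (\<lambda>z. (fst \<circ> z, snd \<circ> z)) (\<lambda>x. (f1 x, f2 x))" by (simp add: y o_def)
  have "pmf (map_pmf (\<lambda>z. (fst \<circ> z, snd \<circ> z)) (Pi_pmf E (d1, d2) (\<lambda>x. pair_pmf (P x) (Q x)))) y
      = pmf (Pi_pmf E (d1, d2) (\<lambda>x. pair_pmf (P x) (Q x))) (\<lambda>x. (f1 x, f2 x))"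
    using pmf_map_inj'[OF inj, of "Pi_pmf E (d1, d2) (\<lambda>x. pair_pmf (P x) (Q x))" "\<lambda>x. (f1 x, f2 x)"] y'
    by simp
  also have "\<dots> = pmf (pair_pmf (Pi_pmf E d1 P) (Pi_pmf E d2 Q)) y"
    unfolding y pmf_pair pmf_Pi[OF assms] by (simp add: prod.distrib) blast
  finally show "pmf (map_pmf (\<lambda>z. (fst \<circ> z, snd \<circ> z)) (Pi_pmf E (d1, d2) (\<lambda>x. pair_pmf (P x) (Q x)))) y
      = pmf (pair_pmf (Pi_pmf E d1 P) (Pi_pmf E d2 Q)) y" .
qed

section \<open>A covariance bound by interpolation\<close>

text \<open>
  For two independent copies \<open>z\<close> of a Bernoulli field on \<open>E\<close>, the expectation of
  \<open>F (fst \<circ> z) * G (hybrid S z)\<close> is \<open>E[F G]\<close> for \<open>S = {}\<close> and \<open>E[F] E[G]\<close> for \<open>S = E\<close>;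
  adding one coordinate \<open>e\<close> to \<open>S\<close> changes it by at most
  \<open>p (1 - p) E |flip_diff F _ e| |flip_diff G _ e|\<close>.
\<close>

definition bernoulli_pairs :: "'a set \<Rightarrow> real \<Rightarrow> ('a \<Rightarrow> bool \<times> bool) pmf" where
  "bernoulli_pairs E p = Pi_pmf E (False, False) (\<lambda>_. pair_pmf (bernoulli_pmf p) (bernoulli_pmf p))"

definition hybrid :: "'a set \<Rightarrow> ('a \<Rightarrow> bool \<times> bool) \<Rightarrow> 'a \<Rightarrow> bool" where
  "hybrid S z = (\<lambda>x. if x \<in> S then snd (z x) else fst (z x))"

definition flip_diff :: "(('a \<Rightarrow> bool) \<Rightarrow> real) \<Rightarrow> ('a \<Rightarrow> bool) \<Rightarrow> 'a \<Rightarrow> real" where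
  "flip_diff F w e = F (w(e := True)) - F (w(e := False))"

lemma finite_set_bernoulli_pairs [simp]: "finite E \<Longrightarrow> finite (set_pmf (bernoulli_pairs E p))"
  unfolding bernoulli_pairs_def by (rule finite_set_pmf_Pi_pmf)

lemma integral_bernoulli_pair_flip:
  fixes F G :: "('a \<Rightarrow> bool) \<Rightarrow> real"
  assumes "0 \<le> p" "p \<le> 1"
  shows "integral\<^sup>L (pair_pmf (bernoulli_pmf p) (bernoulli_pmf p))
      (\<lambda>y. F (w(e := fst y)) * (G (h(e := snd y)) - G (h(e := fst y))))
    = - (p * (1 - p)) * flip_diff F w e * flip_diff G h e"
  using assms
  by (subst integral_pair_pmf_finite) (simp_all add: flip_diff_def algebra_simps)

lemma hybrid_insert_step:
  fixes F G :: "('a \<Rightarrow> bool) \<Rightarrow> real"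
  assumes E: "finite E" and e: "e \<in> E" "e \<notin> S" and p: "0 \<le> p" "p \<le> 1"
  shows "\<bar>integral\<^sup>L (bernoulli_pairs E p) (\<lambda>z. F (fst \<circ> z) * G (hybrid (insert e S) z))
        - integral\<^sup>L (bernoulli_pairs E p) (\<lambda>z. F (fst \<circ> z) * G (hybrid S z))\<bar>
     \<le> p * (1 - p) * integral\<^sup>L (bernoulli_pairs E p)
          (\<lambda>z. \<bar>flip_diff F (fst \<circ> z) e\<bar> * \<bar>flip_diff G (hybrid S z) e\<bar>)"
proof -
  define A where "A = E - {e}"
  have A: "E = insert e A" "e \<notin> A" "finite A" using e E by (auto simp: A_def)
  let ?B = "pair_pmf (bernoulli_pmf p) (bernoulli_pmf p)"
  let ?P = "Pi_pmf A (False, False) (\<lambda>_. ?B)"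
  have Z: "bernoulli_pairs E p = map_pmf (\<lambda>(y, g). g(e := y)) (pair_pmf ?B ?P)"
    unfolding bernoulli_pairs_def A(1) by (rule Pi_pmf_insert[OF A(3,2)])
  have finP: "finite (set_pmf ?P)" using A(3) by simp
  have fst_upd: "fst \<circ> (g(e := y)) = (fst \<circ> g)(e := fst y)" for g :: "'a \<Rightarrow> bool \<times> bool" and y
    by (auto simp: fun_eq_iff)
  have hybrid_upd_in: "hybrid (insert e S) (g(e := y)) = (hybrid S g)(e := snd y)" for g y
    by (auto simp: fun_eq_iff hybrid_def)
  have hybrid_upd_out: "hybrid S (g(e := y)) = (hybrid S g)(e := fst y)" for g y
    using e by (auto simp: fun_eq_iff hybrid_def)
  have "integral\<^sup>L (bernoulli_pairs E p) (\<lambda>z. F (fst \<circ> z) * G (hybrid (insert e S) z))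
        - integral\<^sup>L (bernoulli_pairs E p) (\<lambda>z. F (fst \<circ> z) * G (hybrid S z))
      = integral\<^sup>L (bernoulli_pairs E p) (\<lambda>z. F (fst \<circ> z) * (G (hybrid (insert e S) z) - G (hybrid S z)))"
    by (subst Bochner_Integration.integral_diff[symmetric]) (simp_all add: E algebra_simps)
  also have "\<dots> = integral\<^sup>L ?P (\<lambda>g. integral\<^sup>L ?B (\<lambda>y.
        F ((fst \<circ> g)(e := fst y)) * (G ((hybrid S g)(e := snd y)) - G ((hybrid S g)(e := fst y)))))"
    unfolding Z integral_map_pmf
    by (subst integral_pair_pmf_finite'[OF _ finP])
      (simp_all add: case_prod_unfold fst_upd hybrid_upd_in hybrid_upd_out)
  also have "\<dots> = integral\<^sup>L ?P (\<lambda>g. - (p * (1 - p)) * flip_diff F (fst \<circ> g) e * flip_diff G (hybrid S g) e)"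
    by (simp only: integral_bernoulli_pair_flip[OF p])
  finally have diff: "integral\<^sup>L (bernoulli_pairs E p) (\<lambda>z. F (fst \<circ> z) * G (hybrid (insert e S) z))
        - integral\<^sup>L (bernoulli_pairs E p) (\<lambda>z. F (fst \<circ> z) * G (hybrid S z))
      = integral\<^sup>L ?P (\<lambda>g. - (p * (1 - p)) * flip_diff F (fst \<circ> g) e * flip_diff G (hybrid S g) e)" .
  have flip_upd: "flip_diff H (w(e := b)) e = flip_diff H w e" for H w b
    by (simp add: flip_diff_def)
  have abs_flips: "integral\<^sup>L (bernoulli_pairs E p)
        (\<lambda>z. \<bar>flip_diff F (fst \<circ> z) e\<bar> * \<bar>flip_diff G (hybrid S z) e\<bar>)
      = integral\<^sup>L ?P (\<lambda>g. \<bar>flip_diff F (fst \<circ> g) e\<bar> * \<bar>flip_diff G (hybrid S g) e\<bar>)"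
    unfolding Z integral_map_pmf
    by (subst integral_pair_pmf_finite'[OF _ finP])
      (simp_all add: case_prod_unfold fst_upd hybrid_upd_out flip_upd)
  have "\<bar>integral\<^sup>L ?P (\<lambda>g. - (p * (1 - p)) * flip_diff F (fst \<circ> g) e * flip_diff G (hybrid S g) e)\<bar>
      \<le> integral\<^sup>L ?P (\<lambda>g. \<bar>- (p * (1 - p)) * flip_diff F (fst \<circ> g) e * flip_diff G (hybrid S g) e\<bar>)"
    by (rule integral_abs_bound)
  also have "\<dots> = p * (1 - p) * integral\<^sup>L ?P (\<lambda>g. \<bar>flip_diff F (fst \<circ> g) e\<bar> * \<bar>flip_diff G (hybrid S g) e\<bar>)"
    using p by (simp add: abs_mult mult.assoc)
  finally show ?thesis unfolding diff abs_flips .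
qed

lemma hybrid_telescope:
  fixes F G :: "('a \<Rightarrow> bool) \<Rightarrow> real"
  assumes E: "finite E" and S: "S \<subseteq> E" and p: "0 \<le> p" "p \<le> 1"
    and bound: "\<And>e S'. e \<in> E \<Longrightarrow> S' \<subseteq> E \<Longrightarrow> e \<notin> S' \<Longrightarrow>
      p * (1 - p) * integral\<^sup>L (bernoulli_pairs E p)
        (\<lambda>z. \<bar>flip_diff F (fst \<circ> z) e\<bar> * \<bar>flip_diff G (hybrid S' z) e\<bar>) \<le> B"
  shows "\<bar>integral\<^sup>L (bernoulli_pairs E p) (\<lambda>z. F (fst \<circ> z) * G (hybrid S z))
        - integral\<^sup>L (bernoulli_pairs E p) (\<lambda>z. F (fst \<circ> z) * G (hybrid {} z))\<bar> \<le> real (card S) * B"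
proof -
  have "finite S" using S E finite_subset by blast
  then show ?thesis using S
  proof (induction S rule: finite_induct)
    case empty
    then show ?case by simp
  next
    case (insert e S)
    have "\<bar>integral\<^sup>L (bernoulli_pairs E p) (\<lambda>z. F (fst \<circ> z) * G (hybrid (insert e S) z))
        - integral\<^sup>L (bernoulli_pairs E p) (\<lambda>z. F (fst \<circ> z) * G (hybrid S z))\<bar> \<le> B"
      using hybrid_insert_step[OF E _ insert(2) p, of F G] bound[of e S] insert(2,4) by auto
    moreover have "\<bar>integral\<^sup>L (bernoulli_pairs E p) (\<lambda>z. F (fst \<circ> z) * G (hybrid S z))
        - integral\<^sup>L (bernoulli_pairs E p) (\<lambda>z. F (fst \<circ> z) * G (hybrid {} z))\<bar> \<le> real (card S) * B"
      using insert(3,4) by (simp add: o_def)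
    ultimately show ?case using insert(1,2) by (simp add: o_def algebra_simps)
  qed
qed

lemma covariance_Pi_bernoulli_le:
  fixes F G :: "('a \<Rightarrow> bool) \<Rightarrow> real"
  assumes E: "finite E" and p: "0 \<le> p" "p \<le> 1"
    and bound: "\<And>e S'. e \<in> E \<Longrightarrow> S' \<subseteq> E \<Longrightarrow> e \<notin> S' \<Longrightarrow>
      p * (1 - p) * integral\<^sup>L (bernoulli_pairs E p)
        (\<lambda>z. \<bar>flip_diff F (fst \<circ> z) e\<bar> * \<bar>flip_diff G (hybrid S' z) e\<bar>) \<le> B"
  shows "\<bar>integral\<^sup>L (Pi_pmf E False (\<lambda>_. bernoulli_pmf p)) (\<lambda>\<omega>. F \<omega> * G \<omega>)
      - integral\<^sup>L (Pi_pmf E False (\<lambda>_. bernoulli_pmf p)) F *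
        integral\<^sup>L (Pi_pmf E False (\<lambda>_. bernoulli_pmf p)) G\<bar> \<le> real (card E) * B"
proof -
  let ?O = "Pi_pmf E False (\<lambda>_. bernoulli_pmf p)"
  have split: "map_pmf (\<lambda>z. (fst \<circ> z, snd \<circ> z)) (bernoulli_pairs E p) = pair_pmf ?O ?O"
    unfolding bernoulli_pairs_def by (rule Pi_pmf_pair_pmf[OF E])
  have finO: "finite (set_pmf ?O)" using E by simp
  have "integral\<^sup>L (bernoulli_pairs E p) (\<lambda>z. F (fst \<circ> z) * G (hybrid {} z))
      = integral\<^sup>L (map_pmf (\<lambda>z. (fst \<circ> z, snd \<circ> z)) (bernoulli_pairs E p)) (\<lambda>x. F (fst x) * G (fst x))"
    by (simp add: hybrid_def o_def)
  also have "\<dots> = integral\<^sup>L ?O (\<lambda>\<omega>. F \<omega> * G \<omega>)"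
    unfolding split using expectation_pair_pmf_fst[of ?O ?O "\<lambda>\<omega>. F \<omega> * G \<omega>"] by simp
  finally have start: "integral\<^sup>L (bernoulli_pairs E p) (\<lambda>z. F (fst \<circ> z) * G (hybrid {} z))
      = integral\<^sup>L ?O (\<lambda>\<omega>. F \<omega> * G \<omega>)" .
  have "hybrid E z = snd \<circ> z" if z: "z \<in> set_pmf (bernoulli_pairs E p)" for z
  proof -
    have "z x = (False, False)" if "x \<notin> E" for x
      using set_Pi_pmf_subset[OF E, of "(False, False)"] z that unfolding bernoulli_pairs_def by blast
    then show ?thesis by (auto simp: hybrid_def fun_eq_iff)
  qed
  then have "integral\<^sup>L (bernoulli_pairs E p) (\<lambda>z. F (fst \<circ> z) * G (hybrid E z))
      = integral\<^sup>L (map_pmf (\<lambda>z. (fst \<circ> z, snd \<circ> z)) (bernoulli_pairs E p)) (\<lambda>x. F (fst x) * G (snd x))"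
    by (auto intro!: integral_cong_AE AE_pmfI)
  also have "\<dots> = integral\<^sup>L ?O F * integral\<^sup>L ?O G"
    unfolding split using integral_pair_pmf_mult[OF finO finO, of F G] by (simp add: case_prod_unfold)
  finally have stop: "integral\<^sup>L (bernoulli_pairs E p) (\<lambda>z. F (fst \<circ> z) * G (hybrid E z))
      = integral\<^sup>L ?O F * integral\<^sup>L ?O G" .
  show ?thesis
    using hybrid_telescope[OF E order_refl p bound] unfolding start stop by (simp add: abs_minus_commute)
qed

section \<open>A central limit theorem for each parity class\<close>

definition Phi_std :: "nat \<Rightarrow> real \<Rightarrow> nat set set \<Rightarrow> (nat set set \<Rightarrow> bool) \<Rightarrow> real" where
  "Phi_std d p W \<omega> = (Phi d W \<omega> - mu_p p d) / sigma_p p d"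

lemma mu_p_eq:
  assumes "d \<ge> 1"
  shows "mu_p p d = 2 ^ (d - 1) * (1 - p/2) ^ d"
proof -
  have "(2 - p) ^ d = (2 * (1 - p/2)) ^ d" by simp
  also have "\<dots> = 2 ^ d * (1 - p/2) ^ d" by (rule power_mult_distrib)
  also have "(2::real) ^ d = 2 * 2 ^ (d - 1)" using assms by (cases d) auto
  finally show ?thesis unfolding mu_p_def by simp
qed

lemma sigma_p_sq_eq:
  assumes "d \<ge> 1" "p \<le> 1"
  shows "(sigma_p p d)^2 = 2 ^ (d - 1) * (1 - 3*p/4) ^ d"
proof -
  have "(4 - 3 * p) / 2 = 2 * (1 - 3*p/4)" by (simp add: field_simps)
  then have "((4 - 3 * p) / 2) ^ d = (2 * (1 - 3*p/4)) ^ d" by (simp only:)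
  also have "\<dots> = 2 ^ d * (1 - 3*p/4) ^ d" by (rule power_mult_distrib)
  also have "(2::real) ^ d = 2 * 2 ^ (d - 1)" using assms by (cases d) auto
  finally show ?thesis unfolding sigma_p_def using assms by simp
qed

lemma sigma_p_pos: "p < 1 \<Longrightarrow> 0 < sigma_p p d"
  unfolding sigma_p_def by simp

lemma sigma_p_eq_sqrt:
  assumes "d \<ge> 1" "p \<le> 1"
  shows "sigma_p p d = sqrt (2 ^ (d - 1) * (1 - 3*p/4) ^ d)"
proof -
  have "sigma_p p d = sqrt ((sigma_p p d)^2)" using assms by (simp add: sigma_p_def)
  then show ?thesis using sigma_p_sq_eq[OF assms] by simp
qed

lemma Phi_std_eq_sum:
  assumes W: "W \<in> {even_vertices d, odd_vertices d}" and d: "d \<ge> 1"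
  shows "Phi_std d p W \<omega> = (\<Sum>u\<in>W. (vertex_weight d \<omega> u - (1 - p/2) ^ d) / sigma_p p d)"
proof -
  have "mu_p p d = (\<Sum>u\<in>W. (1 - p/2) ^ d)"
    using mu_p_eq[OF d] card_parity_class[OF W d] by simp
  then have "Phi d W \<omega> - mu_p p d = (\<Sum>u\<in>W. vertex_weight d \<omega> u - (1 - p/2) ^ d)"
    unfolding Phi_eq_sum_vertex_weight by (simp add: sum_subtractf)
  then show ?thesis unfolding Phi_std_def by (simp add: sum_divide_distrib)
qed

lemma char_Phi_std_eq_prod:
  assumes W: "W \<in> {even_vertices d, odd_vertices d}" and d: "d \<ge> 1"
  shows "measure_pmf.expectation (Qdp d p) (\<lambda>\<omega>. iexp (t * Phi_std d p W \<omega>))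
    = (\<Prod>u\<in>W. measure_pmf.expectation (Pi_pmf (incident_edges d u) False (\<lambda>_. bernoulli_pmf p))
          (\<lambda>\<omega>. iexp (t / sigma_p p d * (vertex_weight d \<omega> u - (1 - p/2) ^ d))))"
proof -
  have "iexp (t * Phi_std d p W \<omega>)
      = (\<Prod>u\<in>W. iexp (t / sigma_p p d * (vertex_weight d \<omega> u - (1 - p/2) ^ d)))" for \<omega>
  proof -
    have "t * Phi_std d p W \<omega> = (\<Sum>u\<in>W. t / sigma_p p d * (vertex_weight d \<omega> u - (1 - p/2) ^ d))"
      unfolding Phi_std_eq_sum[OF W d] sum_distrib_left by simp
    then show ?thesis
      by (simp only: of_real_sum sum_distrib_left exp_sum[OF finite_parity_class[OF W]])
  qed
  then have "measure_pmf.expectation (Qdp d p) (\<lambda>\<omega>. iexp (t * Phi_std d p W \<omega>))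
    = measure_pmf.expectation (Qdp d p)
        (\<lambda>\<omega>. \<Prod>u\<in>W. iexp (t / sigma_p p d * (vertex_weight d \<omega> u - (1 - p/2) ^ d)))"
    by simp
  also have "\<dots> = (\<Prod>u\<in>W. measure_pmf.expectation (Pi_pmf (incident_edges d u) False (\<lambda>_. bernoulli_pmf p))
          (\<lambda>\<omega>. iexp (t / sigma_p p d * (vertex_weight d \<omega> u - (1 - p/2) ^ d))))"
    unfolding Qdp_def
  proof (rule expectation_prod_Pi_pmf_blocks[OF finite_parity_class[OF W] finite_cube_edges])
    fix u assume "u \<in> W"
    show "incident_edges d u \<subseteq> cube_edges d" by (rule incident_edges_subset)
  next
    fix u u' assume "u \<in> W" "u' \<in> W" "u \<noteq> u'"
    then show "incident_edges d u \<inter> incident_edges d u' = {}"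
      by (rule parity_class_incident_edges_disjoint[OF W])
  next
    fix u and \<omega> \<omega>' :: "nat set set \<Rightarrow> bool"
    assume "\<And>e. e \<in> incident_edges d u \<Longrightarrow> \<omega> e = \<omega>' e"
    then have "vertex_weight d \<omega> u = vertex_weight d \<omega>' u" by (rule vertex_weight_cong)
    then show "iexp (t / sigma_p p d * (vertex_weight d \<omega> u - (1 - p/2) ^ d))
      = iexp (t / sigma_p p d * (vertex_weight d \<omega>' u - (1 - p/2) ^ d))"
      by simp
  qed
  finally show ?thesis .
qed

lemma expectation_vertex_weight_power:
  assumes u: "u \<in> cube_vertices d" and p: "0 \<le> p" "p \<le> 1"
  shows "measure_pmf.expectation (Pi_pmf (incident_edges d u) False (\<lambda>_. bernoulli_pmf p))
      (\<lambda>\<omega>. vertex_weight d \<omega> u ^ k) = (p * (1/2)^k + (1 - p)) ^ d"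
proof -
  have "measure_pmf.expectation (Pi_pmf (incident_edges d u) False (\<lambda>_. bernoulli_pmf p))
      (\<lambda>\<omega>. vertex_weight d \<omega> u ^ k)
    = (\<Prod>e\<in>incident_edges d u. measure_pmf.expectation (bernoulli_pmf p) (\<lambda>b. edge_factor b ^ k))"
    unfolding vertex_weight_def prod_power_distrib
    by (rule expectation_prod_Pi_pmf) (use p in \<open>auto simp: edge_factor_def\<close>)
  also have "\<dots> = (\<Prod>e\<in>incident_edges d u. p * (1/2)^k + (1 - p))"
    using p by (simp add: edge_factor_def power_one_over)
  finally show ?thesis by (simp add: card_incident_edges[OF u])
qed

lemma iexp_taylor2: "cmod (iexp x - (complex_of_real (1 - x^2/2) + \<i> * complex_of_real x)) \<le> \<bar>x\<bar>^3 / 6"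
proof -
  have "(\<Sum>k\<le>2. (\<i> * complex_of_real x) ^ k / fact k) = complex_of_real (1 - x^2/2) + \<i> * complex_of_real x"
    by (simp add: numeral_2_eq_2 complex_eq_iff power2_eq_square)
  moreover have "fact (Suc 2) = (6::real)" by (simp add: numeral_3_eq_3 numeral_2_eq_2)
  ultimately show ?thesis using iexp_approx1[of x 2] by (simp add: numeral_3_eq_3)
qed

lemma char_pmf_taylor2:
  fixes M :: "'a pmf" and Y :: "'a \<Rightarrow> real"
  assumes fin: "finite (set_pmf M)" and mean: "measure_pmf.expectation M Y = 0"
  shows "cmod (measure_pmf.expectation M (\<lambda>\<omega>. iexp (\<theta> * Y \<omega>))
      - complex_of_real (1 - \<theta>^2 * measure_pmf.expectation M (\<lambda>\<omega>. (Y \<omega>)^2) / 2))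
    \<le> \<bar>\<theta>\<bar>^3 * measure_pmf.expectation M (\<lambda>\<omega>. \<bar>Y \<omega>\<bar>^3) / 6"
proof -
  define P where "P \<omega> = complex_of_real (1 - (\<theta> * Y \<omega>)^2/2) + \<i> * complex_of_real (\<theta> * Y \<omega>)" for \<omega>
  have "measure_pmf.expectation M P
      = complex_of_real (measure_pmf.expectation M (\<lambda>\<omega>. 1 - (\<theta> * Y \<omega>)^2/2))
        + \<i> * complex_of_real (measure_pmf.expectation M (\<lambda>\<omega>. \<theta> * Y \<omega>))"
  proof -
    have "measure_pmf.expectation M P
      = measure_pmf.expectation M (\<lambda>\<omega>. complex_of_real (1 - (\<theta> * Y \<omega>)^2/2))
        + measure_pmf.expectation M (\<lambda>\<omega>. \<i> * complex_of_real (\<theta> * Y \<omega>))"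
      unfolding P_def by (rule Bochner_Integration.integral_add) (use fin in simp_all)
    then show ?thesis by (simp only: integral_complex_of_real integral_mult_right_zero)
  qed
  also have "measure_pmf.expectation M (\<lambda>\<omega>. \<theta> * Y \<omega>) = 0" using mean by simp
  also have "measure_pmf.expectation M (\<lambda>\<omega>. 1 - (\<theta> * Y \<omega>)^2/2)
      = 1 - \<theta>^2 * measure_pmf.expectation M (\<lambda>\<omega>. (Y \<omega>)^2) / 2"
    using fin by (simp add: Bochner_Integration.integral_diff power_mult_distrib)
  finally have EP: "measure_pmf.expectation M P
      = complex_of_real (1 - \<theta>^2 * measure_pmf.expectation M (\<lambda>\<omega>. (Y \<omega>)^2) / 2)"
    by simp
  have "cmod (measure_pmf.expectation M (\<lambda>\<omega>. iexp (\<theta> * Y \<omega>)) - measure_pmf.expectation M P)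
      = cmod (measure_pmf.expectation M (\<lambda>\<omega>. iexp (\<theta> * Y \<omega>) - P \<omega>))"
    using fin by (simp add: Bochner_Integration.integral_diff)
  also have "\<dots> \<le> measure_pmf.expectation M (\<lambda>\<omega>. cmod (iexp (\<theta> * Y \<omega>) - P \<omega>))"
    by (rule integral_norm_bound)
  also have "\<dots> \<le> measure_pmf.expectation M (\<lambda>\<omega>. \<bar>\<theta>\<bar>^3 * \<bar>Y \<omega>\<bar>^3 / 6)"
    using iexp_taylor2[of "\<theta> * Y _"] fin
    by (intro integral_mono) (simp_all add: P_def abs_mult power_mult_distrib)
  also have "\<dots> = \<bar>\<theta>\<bar>^3 * measure_pmf.expectation M (\<lambda>\<omega>. \<bar>Y \<omega>\<bar>^3) / 6"
    by simp
  finally show ?thesis unfolding EP .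
qed

lemma char_vertex_weight_approx:
  assumes u: "u \<in> cube_vertices d" and p: "0 \<le> p" "p \<le> 1"
  shows "cmod (measure_pmf.expectation (Pi_pmf (incident_edges d u) False (\<lambda>_. bernoulli_pmf p))
            (\<lambda>\<omega>. iexp (\<theta> * (vertex_weight d \<omega> u - (1 - p/2)^d)))
          - complex_of_real (1 - \<theta>^2 * ((1 - 3*p/4)^d - ((1 - p/2)^d)^2) / 2))
     \<le> \<bar>\<theta>\<bar>^3 * ((1 - 7*p/8)^d + ((1 - p/2)^d)^3) / 6"
proof -
  let ?P = "Pi_pmf (incident_edges d u) False (\<lambda>_. bernoulli_pmf p)"
  define m where "m = (1 - p/2)^d"
  define Y where "Y \<omega> = vertex_weight d \<omega> u - m" for \<omega>
  have fin: "finite (set_pmf ?P)" by simp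
  have M1: "measure_pmf.expectation ?P (\<lambda>\<omega>. vertex_weight d \<omega> u) = m"
    using expectation_vertex_weight_power[OF u p, of 1] by (simp add: m_def)
  have M2: "measure_pmf.expectation ?P (\<lambda>\<omega>. vertex_weight d \<omega> u ^ 2) = (1 - 3*p/4)^d"
    using expectation_vertex_weight_power[OF u p, of 2] by (simp add: power2_eq_square)
  have M3: "measure_pmf.expectation ?P (\<lambda>\<omega>. vertex_weight d \<omega> u ^ 3) = (1 - 7*p/8)^d"
    using expectation_vertex_weight_power[OF u p, of 3] by (simp add: power3_eq_cube)
  have mean: "measure_pmf.expectation ?P Y = 0"
    unfolding Y_def using fin by (simp add: M1 Bochner_Integration.integral_diff)
  have "measure_pmf.expectation ?P (\<lambda>\<omega>. (Y \<omega>)^2)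
      = measure_pmf.expectation ?P (\<lambda>\<omega>. vertex_weight d \<omega> u ^ 2 - 2 * m * vertex_weight d \<omega> u + m^2)"
    unfolding Y_def by (simp add: power2_eq_square algebra_simps)
  also have "\<dots> = (1 - 3*p/4)^d - m^2"
    using fin by (simp add: Bochner_Integration.integral_diff Bochner_Integration.integral_add M1 M2
        power2_eq_square[of m])
  finally have var: "measure_pmf.expectation ?P (\<lambda>\<omega>. (Y \<omega>)^2) = (1 - 3*p/4)^d - m^2" .
  have "\<bar>Y \<omega>\<bar>^3 \<le> vertex_weight d \<omega> u ^ 3 + m^3" for \<omega>
  proof -
    have w: "0 \<le> vertex_weight d \<omega> u" by (rule vertex_weight_nonneg)
    have m: "0 \<le> m" using p by (simp add: m_def)
    have "\<bar>Y \<omega>\<bar> \<le> max (vertex_weight d \<omega> u) m" using w m by (simp add: Y_def)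
    then have "\<bar>Y \<omega>\<bar>^3 \<le> (max (vertex_weight d \<omega> u) m)^3" by (intro power_mono) auto
    also have "\<dots> \<le> vertex_weight d \<omega> u ^ 3 + m^3" using w m by (auto simp: max_def)
    finally show ?thesis .
  qed
  then have "measure_pmf.expectation ?P (\<lambda>\<omega>. \<bar>Y \<omega>\<bar>^3)
      \<le> measure_pmf.expectation ?P (\<lambda>\<omega>. vertex_weight d \<omega> u ^ 3 + m^3)"
    using fin by (intro integral_mono) auto
  also have "\<dots> = (1 - 7*p/8)^d + m^3"
    using fin by (simp add: Bochner_Integration.integral_add M3)
  finally have "measure_pmf.expectation ?P (\<lambda>\<omega>. \<bar>Y \<omega>\<bar>^3) \<le> (1 - 7*p/8)^d + m^3" .
  then have "\<bar>\<theta>\<bar>^3 * measure_pmf.expectation ?P (\<lambda>\<omega>. \<bar>Y \<omega>\<bar>^3) / 6 \<le> \<bar>\<theta>\<bar>^3 * ((1 - 7*p/8)^d + m^3) / 6"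
    by (intro divide_right_mono mult_left_mono) auto
  with char_pmf_taylor2[OF fin mean, of \<theta>] show ?thesis
    unfolding var by (simp add: Y_def m_def)
qed

lemma abs_exp_minus_linear_approx:
  fixes y :: real assumes "0 \<le> y"
  shows "\<bar>(1 - y) - exp (- y)\<bar> \<le> y^2"
proof -
  have "exp (- y) = 1 / exp y" by (simp add: exp_minus inverse_eq_divide)
  also have "\<dots> \<le> 1 / (1 + y)"
    using assms exp_ge_add_one_self[of y] by (intro divide_left_mono) auto
  also have "\<dots> \<le> 1 - y + y^2"
  proof -
    have "1 \<le> (1 - y + y^2) * (1 + y)"
      using assms by (simp add: algebra_simps power2_eq_square power3_eq_cube[symmetric])
    then show ?thesis using assms by (simp add: divide_le_eq)
  qed
  finally show ?thesis using exp_minus_ge[of y] by simp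
qed

lemma norm_expectation_iexp_le_1:
  "cmod (measure_pmf.expectation M (\<lambda>\<omega>. iexp (f \<omega>))) \<le> 1"
proof -
  have "cmod (measure_pmf.expectation M (\<lambda>\<omega>. iexp (f \<omega>)))
      \<le> measure_pmf.expectation M (\<lambda>\<omega>. cmod (iexp (f \<omega>)))"
    by (rule integral_norm_bound)
  then show ?thesis by (simp add: norm_exp_i_times)
qed

lemma edge_factor_moment_bounds:
  fixes p :: real assumes p: "0 < p" "p < 1"
  shows "0 < 1 - 3*p/4" "0 < 1 - p/2" "0 < 1 - 7*p/8" "(1 - p/2)^2 < 1 - 3*p/4"
    "(1 - 7*p/8)^2 < 2 * (1 - 3*p/4)^3" "(1 - p/2)^6 < 2 * (1 - 3*p/4)^3"
proof -
  show "0 < 1 - 3*p/4" "0 < 1 - p/2" "0 < 1 - 7*p/8" using p by auto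
  have "p * p < p * 1" by (rule mult_strict_left_mono[OF p(2) p(1)])
  then show a2: "(1 - p/2)^2 < 1 - 3*p/4" by (simp add: power2_eq_square algebra_simps)
  define r where "r = 1 - p"
  have r: "0 < r" using p by (simp add: r_def)
  have "2 * (1 - 3*p/4)^3 - (1 - 7*p/8)^2 = (1 + 4*r + 5*r^2 + 54*r^3) / 64"
    unfolding r_def by (simp add: power2_eq_square power3_eq_cube field_simps)
  moreover have "0 < 1 + 4*r + 5*r^2 + 54*r^3" using r by (simp add: add_pos_nonneg)
  ultimately show "(1 - 7*p/8)^2 < 2 * (1 - 3*p/4)^3" by simp
  have "(1 - p/2)^6 = ((1 - p/2)^2)^3" by (simp add: power_mult[symmetric])
  also have "\<dots> < (1 - 3*p/4)^3" using a2 by (intro power_strict_mono) auto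
  also have "\<dots> < 2 * (1 - 3*p/4)^3" using p by simp
  finally show "(1 - p/2)^6 < 2 * (1 - 3*p/4)^3" .
qed


lemma char_Phi_std_approx:
  fixes t :: real
  assumes W: "W \<in> {even_vertices d, odd_vertices d}" and d: "d \<ge> 1" and p: "0 \<le> p" "p \<le> 1"
  defines "y \<equiv> (t / sigma_p p d)^2 * ((1 - 3*p/4)^d - ((1 - p/2)^d)^2) / 2"
  shows "cmod (measure_pmf.expectation (Qdp d p) (\<lambda>\<omega>. iexp (t * Phi_std d p W \<omega>))
           - complex_of_real (exp (- (real (card W) * y))))
     \<le> real (card W) * (\<bar>t / sigma_p p d\<bar>^3 * ((1 - 7*p/8)^d + ((1 - p/2)^d)^3) / 6 + y^2)"
proof -
  let ?\<theta> = "t / sigma_p p d"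
  let ?\<phi> = "\<lambda>u. measure_pmf.expectation (Pi_pmf (incident_edges d u) False (\<lambda>_. bernoulli_pmf p))
          (\<lambda>\<omega>. iexp (?\<theta> * (vertex_weight d \<omega> u - (1 - p/2) ^ d)))"
  have "((1 - p/2)^d)^2 = ((1 - p/2)^2)^d" by (simp add: power_mult[symmetric] mult.commute)
  also have "\<dots> \<le> (1 - 3*p/4)^d"
  proof (rule power_mono)
    have "p * p \<le> p * 1" using p by (intro mult_left_mono) auto
    then show "(1 - p/2)^2 \<le> 1 - 3*p/4" by (simp add: power2_eq_square algebra_simps)
  qed simp
  finally have y: "0 \<le> y" unfolding y_def by simp
  have "exp (- (real (card W) * y)) = exp (- y) ^ card W"
    using exp_of_nat_mult[of "card W" "- y"] by simp
  then have "complex_of_real (exp (- (real (card W) * y))) = (\<Prod>u\<in>W. complex_of_real (exp (- y)))"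
    by simp
  then have "cmod (measure_pmf.expectation (Qdp d p) (\<lambda>\<omega>. iexp (t * Phi_std d p W \<omega>))
           - complex_of_real (exp (- (real (card W) * y))))
      = cmod ((\<Prod>u\<in>W. ?\<phi> u) - (\<Prod>u\<in>W. complex_of_real (exp (- y))))"
    by (simp only: char_Phi_std_eq_prod[OF W d])
  also have "\<dots> \<le> (\<Sum>u\<in>W. cmod (?\<phi> u - complex_of_real (exp (- y))))"
  proof (rule norm_prod_diff)
    fix u show "cmod (?\<phi> u) \<le> 1" by (rule norm_expectation_iexp_le_1)
  next
    fix u show "cmod (complex_of_real (exp (- y))) \<le> 1" using y by simp
  qed
  also have "\<dots> \<le> (\<Sum>u\<in>W. \<bar>?\<theta>\<bar>^3 * ((1 - 7*p/8)^d + ((1 - p/2)^d)^3) / 6 + y^2)"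
  proof (rule sum_mono)
    fix u assume "u \<in> W"
    then have u: "u \<in> cube_vertices d" using parity_class_subset[OF W] by auto
    have "cmod (?\<phi> u - complex_of_real (exp (- y)))
        \<le> cmod (?\<phi> u - complex_of_real (1 - y)) + cmod (complex_of_real (1 - y) - complex_of_real (exp (- y)))"
      using norm_triangle_ineq[of "?\<phi> u - complex_of_real (1 - y)"
          "complex_of_real (1 - y) - complex_of_real (exp (- y))"] by simp
    also have "cmod (?\<phi> u - complex_of_real (1 - y)) \<le> \<bar>?\<theta>\<bar>^3 * ((1 - 7*p/8)^d + ((1 - p/2)^d)^3) / 6"
      using char_vertex_weight_approx[OF u p, of ?\<theta>] unfolding y_def by (simp add: power_mult_distrib)
    also have "cmod (complex_of_real (1 - y) - complex_of_real (exp (- y))) \<le> y^2"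
      using abs_exp_minus_linear_approx[OF y] by (simp del: of_real_diff add: of_real_diff[symmetric])
    finally show "cmod (?\<phi> u - complex_of_real (exp (- y)))
        \<le> \<bar>?\<theta>\<bar>^3 * ((1 - 7*p/8)^d + ((1 - p/2)^d)^3) / 6 + y^2"
      by simp
  qed
  finally show ?thesis by simp
qed

lemma power2_add_le: "((x::real) + y)^2 \<le> 2 * (x^2 + y^2)"
proof -
  have "0 \<le> (x - y)^2" by simp
  then show ?thesis by (simp add: power2_eq_square algebra_simps)
qed

lemma lyapunov_ratio_tendsto_zero:
  fixes p :: real assumes p: "0 < p" "p < 1"
  shows "(\<lambda>d. 2^(d-1) * ((1-7*p/8)^d + ((1-p/2)^d)^3) / (sqrt (2^(d-1) * (1-3*p/4)^d))^3) \<longlonglongrightarrow> 0"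
proof -
  note pb = edge_factor_moment_bounds[OF p]
  define a where "a = 1 - p/2"
  define b where "b = 1 - 3*p/4"
  define c where "c = 1 - 7*p/8"
  have a: "0 < a" and b: "0 < b" and c: "0 < c" using pb by (auto simp: a_def b_def c_def)
  have c2: "c^2 / (2 * b^3) < 1" and a6: "a^6 / (2 * b^3) < 1"
    using pb b by (simp_all add: a_def b_def c_def)
  define Q where "Q d = 2^(d-1) * (c^d + (a^d)^3) / (sqrt (2^(d-1) * b^d))^3" for d :: nat
  define R where "R d = 4 * ((c^2 / (2 * b^3))^d + (a^6 / (2 * b^3))^d)" for d :: nat
  have Q0: "0 \<le> Q d" for d unfolding Q_def using a b c by simp
  have QR: "(Q d)^2 \<le> R d" if d: "d \<ge> 1" for d
  proof -
    define n :: real where "n = 2^(d-1)"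
    have n: "0 < n" by (simp add: n_def)
    have n2: "2 * n = 2^d" using d unfolding n_def by (cases d) auto
    define X where "X = c^d + (a^d)^3"
    have s2: "(sqrt (n * b^d))^2 = n * b^d" using n b by simp
    have "(Q d)^2 = n^2 * X^2 / ((sqrt (n * b^d))^2)^3"
      unfolding Q_def n_def[symmetric] X_def[symmetric]
      by (simp add: power_divide power_mult_distrib power_mult[symmetric] mult.commute)
    also have "\<dots> = X^2 / (n * (b^3)^d)"
      unfolding s2 using n b
      by (simp add: power_mult_distrib power_mult[symmetric] mult.commute power2_eq_square power3_eq_cube)
    also have "\<dots> \<le> 2 * ((c^2)^d + (a^6)^d) / (n * (b^3)^d)"
    proof (rule divide_right_mono)
      have "X^2 \<le> 2 * ((c^d)^2 + ((a^d)^3)^2)" unfolding X_def by (rule power2_add_le)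
      also have "(c^d)^2 = (c^2)^d" by (simp add: power_mult[symmetric] mult.commute)
      also have "((a^d)^3)^2 = (a^6)^d" by (simp add: power_mult[symmetric] mult.commute)
      finally show "X^2 \<le> 2 * ((c^2)^d + (a^6)^d)" .
    qed (use n b in simp)
    also have "\<dots> = 4 * ((c^2)^d + (a^6)^d) / ((2 * b^3)^d)"
      using n b by (simp add: power_mult_distrib field_simps n2[symmetric])
    also have "\<dots> = R d"
      unfolding R_def by (simp add: power_divide add_divide_distrib)
    finally show ?thesis .
  qed
  have "R \<longlonglongrightarrow> 0"
    unfolding R_def using c2 a6 b c a
    by (auto intro!: tendsto_eq_intros LIMSEQ_realpow_zero simp: zero_le_divide_iff)
  then have "(\<lambda>d. sqrt (R d)) \<longlonglongrightarrow> sqrt 0" by (intro tendsto_real_sqrt)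
  then have sqrt_R: "(\<lambda>d. sqrt (R d)) \<longlonglongrightarrow> 0" by simp
  have "Q \<longlonglongrightarrow> 0"
  proof (rule tendsto_sandwich[OF _ _ tendsto_const sqrt_R])
    show "\<forall>\<^sub>F d in sequentially. 0 \<le> Q d" using Q0 by simp
    show "\<forall>\<^sub>F d in sequentially. Q d \<le> sqrt (R d)"
      using eventually_ge_at_top[of "1::nat"]
      by eventually_elim (use Q0 QR in \<open>auto intro: real_le_rsqrt\<close>)
  qed
  then show ?thesis unfolding Q_def a_def b_def c_def .
qed


lemma char_Phi_std_error_le:
  fixes p t :: real
  assumes p: "0 < p" "p < 1" and W: "W \<in> {even_vertices d, odd_vertices d}" and d: "d \<ge> 1"
  defines "\<rho> \<equiv> (1 - p/2)^2 / (1 - 3*p/4)"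
  shows "cmod (measure_pmf.expectation (Qdp d p) (\<lambda>\<omega>. iexp (t * Phi_std d p W \<omega>))
           - complex_of_real (exp (- (t^2/2 * (1 - \<rho>^d)))))
    \<le> \<bar>t\<bar>^3 / 6 * (2^(d-1) * ((1-7*p/8)^d + ((1-p/2)^d)^3) / (sqrt (2^(d-1) * (1-3*p/4)^d))^3)
      + 2 * (t^2/2 * (1 - \<rho>^d))^2 * (1/2)^d"
proof -
  note pb = edge_factor_moment_bounds[OF p]
  define y where "y = (t / sigma_p p d)^2 * ((1 - 3*p/4)^d - ((1 - p/2)^d)^2) / 2"
  let ?n = "real (card W)"
  have n: "?n = 2^(d-1)" using card_parity_class[OF W d] by simp
  have \<sigma>: "sigma_p p d = sqrt (2 ^ (d - 1) * (1 - 3*p/4) ^ d)" "0 < sigma_p p d"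
    using sigma_p_eq_sqrt[OF d] sigma_p_pos p by auto
  have ny: "?n * y = t^2/2 * (1 - \<rho>^d)"
  proof -
    have "((1 - p/2)^d)^2 = ((1 - p/2)^2)^d" by (simp add: power_mult[symmetric] mult.commute)
    then have "?n * y
        = 2 ^ (d - 1) * (t^2 / (2 ^ (d - 1) * (1 - 3*p/4) ^ d)) * ((1 - 3*p/4)^d - ((1 - p/2)^2)^d) / 2"
      unfolding y_def n using sigma_p_sq_eq[OF d] p by (simp add: power_divide)
    also have "\<dots> = t^2/2 * (1 - ((1 - p/2)^2)^d / (1 - 3*p/4)^d)"
      using pb by (simp add: field_simps)
    finally show ?thesis by (simp add: \<rho>_def power_divide)
  qed
  have "cmod (measure_pmf.expectation (Qdp d p) (\<lambda>\<omega>. iexp (t * Phi_std d p W \<omega>))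
         - complex_of_real (exp (- (?n * y))))
    \<le> ?n * (\<bar>t / sigma_p p d\<bar>^3 * ((1 - 7*p/8)^d + ((1 - p/2)^d)^3) / 6 + y^2)"
    unfolding y_def by (rule char_Phi_std_approx[OF W d]) (use p in auto)
  also have "\<dots> = \<bar>t\<bar>^3 / 6 * (2^(d-1) * ((1-7*p/8)^d + ((1-p/2)^d)^3) / (sqrt (2^(d-1) * (1-3*p/4)^d))^3)
      + (?n * y)^2 / ?n"
    unfolding n \<sigma>(1)[symmetric] using \<sigma>(2)
    by (simp add: power_divide abs_divide power2_eq_square field_simps)
  also have "(?n * y)^2 / ?n = 2 * (t^2/2 * (1 - \<rho>^d))^2 * (1/2)^d"
  proof -
    have "(2::real)^(d-1) * 2 = 2^d" using d by (cases d) auto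
    then show ?thesis unfolding ny by (simp add: n field_simps power_one_over)
  qed
  finally show ?thesis unfolding ny .
qed

lemma tendsto_char_Phi_std:
  fixes p t :: real and W :: "nat \<Rightarrow> nat set set"
  assumes p: "0 < p" "p < 1" and W: "\<And>d. W d \<in> {even_vertices d, odd_vertices d}"
  shows "(\<lambda>d. measure_pmf.expectation (Qdp d p) (\<lambda>\<omega>. iexp (t * Phi_std d p (W d) \<omega>)))
           \<longlonglongrightarrow> complex_of_real (exp (- (t^2) / 2))"
proof -
  define \<rho> where "\<rho> = (1 - p/2)^2 / (1 - 3*p/4)"
  have \<rho>: "0 \<le> \<rho>" "\<rho> < 1" using edge_factor_moment_bounds[OF p] by (auto simp: \<rho>_def)
  define Q where "Q d = 2^(d-1) * ((1-7*p/8)^d + ((1-p/2)^d)^3) / (sqrt (2^(d-1) * (1-3*p/4)^d))^3"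
    for d :: nat
  define B where "B d = \<bar>t\<bar>^3 / 6 * Q d + 2 * (t^2/2 * (1 - \<rho>^d))^2 * (1/2)^d" for d :: nat
  have "Q \<longlonglongrightarrow> 0" unfolding Q_def by (rule lyapunov_ratio_tendsto_zero[OF p])
  moreover have "(\<lambda>d. (1/2::real)^d) \<longlonglongrightarrow> 0" by (rule LIMSEQ_realpow_zero) auto
  ultimately have "B \<longlonglongrightarrow> \<bar>t\<bar>^3 / 6 * 0 + 2 * (t^2/2 * (1 - 0))^2 * 0"
    unfolding B_def by (intro tendsto_intros) (use \<rho> in auto)
  then have "B \<longlonglongrightarrow> 0" by simp
  then have "(\<lambda>d. measure_pmf.expectation (Qdp d p) (\<lambda>\<omega>. iexp (t * Phi_std d p (W d) \<omega>))
           - complex_of_real (exp (- (t^2/2 * (1 - \<rho>^d))))) \<longlonglongrightarrow> 0"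
  proof (rule Lim_null_comparison[rotated])
    show "\<forall>\<^sub>F d in sequentially. cmod (measure_pmf.expectation (Qdp d p) (\<lambda>\<omega>. iexp (t * Phi_std d p (W d) \<omega>))
           - complex_of_real (exp (- (t^2/2 * (1 - \<rho>^d))))) \<le> B d"
      using eventually_ge_at_top[of "1::nat"]
      by eventually_elim (unfold B_def Q_def \<rho>_def, rule char_Phi_std_error_le[OF p W])
  qed
  moreover have "(\<lambda>d. complex_of_real (exp (- (t^2/2 * (1 - \<rho>^d)))))
      \<longlonglongrightarrow> complex_of_real (exp (- (t^2/2 * (1 - 0))))"
    by (intro tendsto_intros LIMSEQ_realpow_zero \<rho>)
  ultimately show ?thesis using Lim_transform by fastforce
qed

lemma weak_conv_Phi_std:
  fixes p :: real and W :: "nat \<Rightarrow> nat set set"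
  assumes p: "0 < p" "p < 1" and W: "\<And>d. W d \<in> {even_vertices d, odd_vertices d}"
  shows "weak_conv_m (\<lambda>d. distr (measure_pmf (Qdp d p)) borel (Phi_std d p (W d))) std_normal_distribution"
proof (rule levy_continuity)
  fix d show "real_distribution (distr (measure_pmf (Qdp d p)) borel (Phi_std d p (W d)))"
    by (rule prob_space.real_distribution_distr[OF measure_pmf.prob_space_axioms]) simp
next
  show "real_distribution std_normal_distribution" by (rule real_dist_normal_dist)
next
  fix t
  have "char (distr (measure_pmf (Qdp d p)) borel (Phi_std d p (W d))) t
      = measure_pmf.expectation (Qdp d p) (\<lambda>\<omega>. iexp (t * Phi_std d p (W d) \<omega>))" for d
    unfolding char_def by (subst integral_distr) simp_all
  then show "(\<lambda>d. char (distr (measure_pmf (Qdp d p)) borel (Phi_std d p (W d))) t)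
      \<longlonglongrightarrow> char std_normal_distribution t"
    using tendsto_char_Phi_std[OF p W] by (simp add: char_std_normal_distribution)
qed

lemma tendsto_expectation_Phi_std:
  fixes p :: real and W :: "nat \<Rightarrow> nat set set" and g :: "real \<Rightarrow> real"
  assumes p: "0 < p" "p < 1" and W: "\<And>d. W d \<in> {even_vertices d, odd_vertices d}"
    and g: "continuous_on UNIV g" "\<And>x. \<bar>g x\<bar> \<le> B"
  shows "(\<lambda>d. measure_pmf.expectation (Qdp d p) (\<lambda>\<omega>. g (Phi_std d p (W d) \<omega>)))
    \<longlonglongrightarrow> integral\<^sup>L std_normal_distribution g"
proof -
  have "(\<lambda>d. integral\<^sup>L (distr (measure_pmf (Qdp d p)) borel (Phi_std d p (W d))) g)
      \<longlonglongrightarrow> integral\<^sup>L std_normal_distribution g"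
  proof (rule weak_conv_imp_integral_bdd_continuous_conv)
    fix d show "real_distribution (distr (measure_pmf (Qdp d p)) borel (Phi_std d p (W d)))"
      by (rule prob_space.real_distribution_distr[OF measure_pmf.prob_space_axioms]) simp
  next
    show "real_distribution std_normal_distribution" by (rule real_dist_normal_dist)
  next
    show "weak_conv_m (\<lambda>d. distr (measure_pmf (Qdp d p)) borel (Phi_std d p (W d))) std_normal_distribution"
      by (rule weak_conv_Phi_std[OF p W])
  next
    fix x show "isCont g x" using g(1) by (simp add: continuous_on_eq_continuous_at)
  next
    fix x show "norm (g x) \<le> B" using g(2) by simp
  qed
  moreover have "integral\<^sup>L (distr (measure_pmf (Qdp d p)) borel (Phi_std d p (W d))) g
      = measure_pmf.expectation (Qdp d p) (\<lambda>\<omega>. g (Phi_std d p (W d) \<omega>))" for d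
    using g(1) by (subst integral_distr) (auto intro: borel_measurable_continuous_onI)
  ultimately show ?thesis by simp
qed

section \<open>Decorrelation of the two parity classes\<close>

definition bounded_lipschitz :: "(real \<Rightarrow> real) \<Rightarrow> bool" where
  "bounded_lipschitz g \<longleftrightarrow> (\<exists>B. \<forall>x. \<bar>g x\<bar> \<le> B) \<and> (\<exists>L\<ge>0. \<forall>x y. \<bar>g x - g y\<bar> \<le> L * \<bar>x - y\<bar>)"

lemma bounded_lipschitzE:
  assumes "bounded_lipschitz g"
  obtains B L where "\<And>x. \<bar>g x\<bar> \<le> B" "0 \<le> L" "\<And>x y. \<bar>g x - g y\<bar> \<le> L * \<bar>x - y\<bar>"
proof -
  from assms obtain B L where "\<forall>x. \<bar>g x\<bar> \<le> B" "0 \<le> L" "\<forall>x y. \<bar>g x - g y\<bar> \<le> L * \<bar>x - y\<bar>"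
    unfolding bounded_lipschitz_def by blast
  then show ?thesis using that by blast
qed

lemma continuous_on_bounded_lipschitz: "bounded_lipschitz g \<Longrightarrow> continuous_on UNIV g"
proof -
  assume "bounded_lipschitz g"
  then obtain B L where "\<And>x. \<bar>g x\<bar> \<le> B" "0 \<le> L" "\<And>x y. \<bar>g x - g y\<bar> \<le> L * \<bar>x - y\<bar>"
    by (rule bounded_lipschitzE) blast
  then have "L-lipschitz_on UNIV g"
    by (intro lipschitz_onI) (auto simp: dist_real_def)
  then show ?thesis by (rule lipschitz_on_continuous_on)
qed

lemma sum_vertex_weight_fun_upd:
  assumes W: "W \<in> {even_vertices d, odd_vertices d}" and u: "u \<in> W" and e: "e \<in> incident_edges d u"
  shows "(\<Sum>u'\<in>W. vertex_weight d (w(e := b)) u')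
    = edge_factor b * (\<Prod>e'\<in>incident_edges d u - {e}. edge_factor (w e')) + (\<Sum>u'\<in>W - {u}. vertex_weight d w u')"
proof -
  have "(\<Sum>u'\<in>W. vertex_weight d (w(e := b)) u')
      = vertex_weight d (w(e := b)) u + (\<Sum>u'\<in>W - {u}. vertex_weight d (w(e := b)) u')"
    by (rule sum.remove[OF finite_parity_class[OF W] u])
  also have "(\<Sum>u'\<in>W - {u}. vertex_weight d (w(e := b)) u') = (\<Sum>u'\<in>W - {u}. vertex_weight d w u')"
  proof (rule sum.cong[OF refl])
    fix u' assume "u' \<in> W - {u}"
    then have "e \<notin> incident_edges d u'"
      using parity_class_incident_edges_disjoint[OF W u, of u'] e by auto
    then show "vertex_weight d (w(e := b)) u' = vertex_weight d w u'"
      by (intro vertex_weight_cong) auto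
  qed
  finally show ?thesis by (simp only: vertex_weight_fun_upd[OF e])
qed

lemma flip_diff_Phi_std_le:
  assumes W: "W \<in> {even_vertices d, odd_vertices d}" "u \<in> W" "e \<in> incident_edges d u"
    and p: "p < 1" and L: "\<And>x y. \<bar>g x - g y\<bar> \<le> L * \<bar>x - y\<bar>"
  shows "\<bar>flip_diff (\<lambda>\<omega>. g (Phi_std d p W \<omega>)) w e\<bar>
    \<le> L * (\<Prod>e'\<in>incident_edges d u - {e}. edge_factor (w e')) / (2 * sigma_p p d)"
proof -
  let ?r = "\<Prod>e'\<in>incident_edges d u - {e}. edge_factor (w e')"
  have "Phi_std d p W (w(e := True)) - Phi_std d p W (w(e := False))
      = (edge_factor True - edge_factor False) * ?r / sigma_p p d"
    unfolding Phi_std_def Phi_eq_sum_vertex_weight sum_vertex_weight_fun_upd[OF W]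
    by (simp add: diff_divide_distrib[symmetric] left_diff_distrib)
  also have "\<dots> = - (?r / (2 * sigma_p p d))" by (simp add: edge_factor_def)
  finally have "\<bar>Phi_std d p W (w(e := True)) - Phi_std d p W (w(e := False))\<bar> = ?r / (2 * sigma_p p d)"
    using prod_nonneg[of _ "\<lambda>e'. edge_factor (w e')"] edge_factor_nonneg sigma_p_pos[OF p, of d]
    by simp
  then show ?thesis
    unfolding flip_diff_def using L[of "Phi_std d p W (w(e := True))" "Phi_std d p W (w(e := False))"]
    by (simp add: mult.assoc)
qed

lemma expectation_edge_factor_products:
  assumes E: "finite E" and AB: "A \<subseteq> E" "B \<subseteq> E" "A \<inter> B = {}" and p: "0 \<le> p" "p \<le> 1"
  shows "integral\<^sup>L (bernoulli_pairs E p)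
      (\<lambda>z. (\<Prod>e\<in>A. edge_factor (fst (z e))) * (\<Prod>e\<in>B. edge_factor (hybrid S z e)))
    = (1 - p/2) ^ (card A + card B)"
proof -
  define \<phi> where "\<phi> e y = (if e \<in> A then edge_factor (fst y)
      else if e \<in> B then edge_factor (if e \<in> S then snd y else fst y) else 1)"
    for e and y :: "bool \<times> bool"
  have fin: "finite A" "finite B" using AB(1,2) E by (auto intro: finite_subset)
  have prod_\<phi>: "(\<Prod>e\<in>A. edge_factor (fst (z e))) * (\<Prod>e\<in>B. edge_factor (hybrid S z e))
      = (\<Prod>e\<in>E. \<phi> e (z e))" for z
  proof -
    have "(\<Prod>e\<in>E. \<phi> e (z e)) = (\<Prod>e\<in>A \<union> B. \<phi> e (z e))"
      using AB E by (intro prod.mono_neutral_right) (auto simp: \<phi>_def)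
    also have "\<dots> = (\<Prod>e\<in>A. \<phi> e (z e)) * (\<Prod>e\<in>B. \<phi> e (z e))"
      using fin AB by (intro prod.union_disjoint) auto
    also have "(\<Prod>e\<in>A. \<phi> e (z e)) = (\<Prod>e\<in>A. edge_factor (fst (z e)))"
      by (intro prod.cong) (auto simp: \<phi>_def)
    also have "(\<Prod>e\<in>B. \<phi> e (z e)) = (\<Prod>e\<in>B. edge_factor (hybrid S z e))"
      using AB by (intro prod.cong) (auto simp: \<phi>_def hybrid_def)
    finally show ?thesis by simp
  qed
  have expectation_\<phi>: "measure_pmf.expectation (pair_pmf (bernoulli_pmf p) (bernoulli_pmf p)) (\<phi> e)
      = (if e \<in> A \<union> B then 1 - p/2 else 1)" for e
  proof -
    have "measure_pmf.expectation (bernoulli_pmf p) edge_factor = 1 - p/2"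
      using p by (simp add: edge_factor_def)
    then show ?thesis
      by (cases "e \<in> A"; cases "e \<in> B"; cases "e \<in> S") (simp_all add: \<phi>_def[abs_def])
  qed
  have "integral\<^sup>L (bernoulli_pairs E p)
      (\<lambda>z. (\<Prod>e\<in>A. edge_factor (fst (z e))) * (\<Prod>e\<in>B. edge_factor (hybrid S z e)))
      = integral\<^sup>L (bernoulli_pairs E p) (\<lambda>z. \<Prod>e\<in>E. \<phi> e (z e))"
    by (simp only: prod_\<phi>)
  also have "\<dots> = (\<Prod>e\<in>E. measure_pmf.expectation (pair_pmf (bernoulli_pmf p) (bernoulli_pmf p)) (\<phi> e))"
    unfolding bernoulli_pairs_def
    by (rule expectation_prod_Pi_pmf[OF E]) (auto simp: \<phi>_def edge_factor_nonneg)
  also have "\<dots> = (\<Prod>e\<in>E. if e \<in> A \<union> B then 1 - p/2 else 1)"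
    by (simp only: expectation_\<phi>)
  also have "\<dots> = (1 - p/2) ^ card (A \<union> B)"
  proof -
    have "E \<inter> {e. e \<in> A \<union> B} = A \<union> B" using AB by blast
    then show ?thesis by (simp add: prod.If_cases[OF E])
  qed
  also have "card (A \<union> B) = card A + card B"
    using fin AB by (simp add: card_Un_disjoint)
  finally show ?thesis .
qed


lemma flip_diff_even_odd_product_le:
  assumes u: "u \<in> even_vertices d" "e \<in> incident_edges d u"
    and v: "v \<in> odd_vertices d" "e \<in> incident_edges d v" and p: "p < 1"
    and g: "\<And>x y. \<bar>g x - g y\<bar> \<le> L1 * \<bar>x - y\<bar>" "0 \<le> L1"
    and h: "\<And>x y. \<bar>h x - h y\<bar> \<le> L2 * \<bar>x - y\<bar>"
  shows "\<bar>flip_diff (\<lambda>\<omega>. g (Phi_std d p (even_vertices d) \<omega>)) w e\<bar>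
      * \<bar>flip_diff (\<lambda>\<omega>. h (Phi_std d p (odd_vertices d) \<omega>)) w' e\<bar>
    \<le> L1 * L2 / (4 * (sigma_p p d)^2) * ((\<Prod>e'\<in>incident_edges d u - {e}. edge_factor (w e'))
          * (\<Prod>e'\<in>incident_edges d v - {e}. edge_factor (w' e')))"
proof -
  let ?s = "sigma_p p d"
  have "\<bar>flip_diff (\<lambda>\<omega>. g (Phi_std d p (even_vertices d) \<omega>)) w e\<bar>
      * \<bar>flip_diff (\<lambda>\<omega>. h (Phi_std d p (odd_vertices d) \<omega>)) w' e\<bar>
    \<le> (L1 * (\<Prod>e'\<in>incident_edges d u - {e}. edge_factor (w e')) / (2 * ?s))
      * (L2 * (\<Prod>e'\<in>incident_edges d v - {e}. edge_factor (w' e')) / (2 * ?s))"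
  proof (rule mult_mono)
    show "0 \<le> L1 * (\<Prod>e'\<in>incident_edges d u - {e}. edge_factor (w e')) / (2 * ?s)"
      using g(2) sigma_p_pos[OF p, of d] by (simp add: prod_nonneg edge_factor_nonneg)
  qed (use flip_diff_Phi_std_le[OF _ u p g(1)] flip_diff_Phi_std_le[OF _ v p h] in simp_all)
  then show ?thesis by (simp add: power2_eq_square field_simps)
qed

lemma covariance_Phi_std_even_odd_le:
  assumes p: "0 \<le> p" "p < 1"
    and g: "\<And>x y. \<bar>g x - g y\<bar> \<le> L1 * \<bar>x - y\<bar>" "0 \<le> L1"
    and h: "\<And>x y. \<bar>h x - h y\<bar> \<le> L2 * \<bar>x - y\<bar>"
  shows "\<bar>measure_pmf.expectation (Qdp d p)
        (\<lambda>\<omega>. g (Phi_std d p (even_vertices d) \<omega>) * h (Phi_std d p (odd_vertices d) \<omega>))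
      - measure_pmf.expectation (Qdp d p) (\<lambda>\<omega>. g (Phi_std d p (even_vertices d) \<omega>)) *
        measure_pmf.expectation (Qdp d p) (\<lambda>\<omega>. h (Phi_std d p (odd_vertices d) \<omega>))\<bar>
    \<le> real (card (cube_edges d))
      * (p * (1 - p) * (L1 * L2 / (4 * (sigma_p p d)^2) * (1 - p/2) ^ (2 * (d - 1))))"
  unfolding Qdp_def
proof (rule covariance_Pi_bernoulli_le[OF finite_cube_edges p(1) less_imp_le[OF p(2)]])
  let ?C = "L1 * L2 / (4 * (sigma_p p d)^2)"
  let ?G = "\<lambda>\<omega>. g (Phi_std d p (even_vertices d) \<omega>)"
  let ?H = "\<lambda>\<omega>. h (Phi_std d p (odd_vertices d) \<omega>)"
  fix e S assume e: "e \<in> cube_edges d"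
  obtain u v where u: "u \<in> even_vertices d" "e \<in> incident_edges d u"
    and v: "v \<in> odd_vertices d" "e \<in> incident_edges d v"
    using e by (rule cube_edge_incident_even_oddE)
  have "u \<noteq> v" using u v by (auto simp: even_vertices_def odd_vertices_def)
  then have uv: "incident_edges d u \<inter> incident_edges d v = {e}"
    by (rule incident_edges_Int[OF u(2) v(2)])
  have "integral\<^sup>L (bernoulli_pairs (cube_edges d) p)
        (\<lambda>z. \<bar>flip_diff ?G (fst \<circ> z) e\<bar> * \<bar>flip_diff ?H (hybrid S z) e\<bar>)
      \<le> integral\<^sup>L (bernoulli_pairs (cube_edges d) p)
        (\<lambda>z. ?C * ((\<Prod>e'\<in>incident_edges d u - {e}. edge_factor (fst (z e')))
          * (\<Prod>e'\<in>incident_edges d v - {e}. edge_factor (hybrid S z e'))))"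
  proof (intro integral_mono)
    fix z
    show "\<bar>flip_diff ?G (fst \<circ> z) e\<bar> * \<bar>flip_diff ?H (hybrid S z) e\<bar>
      \<le> ?C * ((\<Prod>e'\<in>incident_edges d u - {e}. edge_factor (fst (z e')))
          * (\<Prod>e'\<in>incident_edges d v - {e}. edge_factor (hybrid S z e')))"
      using flip_diff_even_odd_product_le[OF u v p(2) g h(1), of "fst \<circ> z" "hybrid S z"] by simp
  qed simp_all
  also have "\<dots> = ?C * (1 - p/2) ^ (card (incident_edges d u - {e}) + card (incident_edges d v - {e}))"
    using incident_edges_subset[of d u] incident_edges_subset[of d v] uv p
    by (subst integral_mult_right_zero, subst expectation_edge_factor_products) auto
  also have "card (incident_edges d u - {e}) + card (incident_edges d v - {e}) = 2 * (d - 1)"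
  proof -
    have "u \<in> cube_vertices d" "v \<in> cube_vertices d"
      using u(1) v(1) by (auto simp: even_vertices_def odd_vertices_def)
    then show ?thesis using u(2) v(2) by (simp add: card_incident_edges)
  qed
  finally show "p * (1 - p) * integral\<^sup>L (bernoulli_pairs (cube_edges d) p)
        (\<lambda>z. \<bar>flip_diff ?G (fst \<circ> z) e\<bar> * \<bar>flip_diff ?H (hybrid S z) e\<bar>)
      \<le> p * (1 - p) * (?C * (1 - p/2) ^ (2 * (d - 1)))"
    by (rule mult_left_mono) (use p in simp)
qed

lemma covariance_bound_geometric:
  assumes p: "0 < p" "p < 1" and d: "d \<ge> 1"
  shows "real (card (cube_edges d))
      * (p * (1 - p) * (L1 * L2 / (4 * (sigma_p p d)^2) * (1 - p/2) ^ (2 * (d - 1))))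
    = p * (1 - p) * L1 * L2 / (4 * (1 - p/2)^2) * (real d * ((1 - p/2)^2 / (1 - 3*p/4))^d)"
proof -
  define a where "a = 1 - p/2"
  define b where "b = 1 - 3*p/4"
  have a: "0 < a" and b: "0 < b" using edge_factor_moment_bounds[OF p] by (auto simp: a_def b_def)
  have \<sigma>: "(sigma_p p d)^2 = 2 ^ (d - 1) * b ^ d"
    using sigma_p_sq_eq[OF d] p by (simp add: b_def)
  have "(a^2)^d = (a^2)^(d-1) * a^2" using d by (cases d) auto
  then have a_pow: "a ^ (2 * (d - 1)) = (a^2)^d / a^2"
    using a by (simp add: power_mult)
  show ?thesis
    unfolding a_def[symmetric] b_def[symmetric]
    unfolding \<sigma> a_pow card_cube_edges[OF d] using a b
    by (simp add: power_divide field_simps)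
qed

lemma tendsto_expectation_even_odd_product:
  fixes p :: real
  assumes p: "0 < p" "p < 1" and g: "bounded_lipschitz g" and h: "bounded_lipschitz h"
  shows "(\<lambda>d. measure_pmf.expectation (Qdp d p)
      (\<lambda>\<omega>. g (Phi_std d p (even_vertices d) \<omega>) * h (Phi_std d p (odd_vertices d) \<omega>)))
    \<longlonglongrightarrow> integral\<^sup>L std_normal_distribution g * integral\<^sup>L std_normal_distribution h"
proof -
  obtain B1 L1 where g': "\<And>x. \<bar>g x\<bar> \<le> B1" "0 \<le> L1" "\<And>x y. \<bar>g x - g y\<bar> \<le> L1 * \<bar>x - y\<bar>"
    using g by (rule bounded_lipschitzE) blast
  obtain B2 L2 where h': "\<And>x. \<bar>h x\<bar> \<le> B2" "0 \<le> L2" "\<And>x y. \<bar>h x - h y\<bar> \<le> L2 * \<bar>x - y\<bar>"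
    using h by (rule bounded_lipschitzE) blast
  let ?E = "\<lambda>d f. measure_pmf.expectation (Qdp d p) f"
  let ?X = "\<lambda>d. Phi_std d p (even_vertices d)" and ?Y = "\<lambda>d. Phi_std d p (odd_vertices d)"
  define \<rho> where "\<rho> = (1 - p/2)^2 / (1 - 3*p/4)"
  have \<rho>: "0 \<le> \<rho>" "\<rho> < 1" using edge_factor_moment_bounds[OF p] by (auto simp: \<rho>_def)
  define C where "C = p * (1 - p) * L1 * L2 / (4 * (1 - p/2)^2)"
  have "(\<lambda>d. C * (real d * \<rho>^d)) \<longlonglongrightarrow> 0"
    using powser_times_n_limit_0[of \<rho>] \<rho> by (intro tendsto_mult_right_zero) auto
  then have "(\<lambda>d. ?E d (\<lambda>\<omega>. g (?X d \<omega>) * h (?Y d \<omega>))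
      - ?E d (\<lambda>\<omega>. g (?X d \<omega>)) * ?E d (\<lambda>\<omega>. h (?Y d \<omega>))) \<longlonglongrightarrow> 0"
  proof (rule Lim_null_comparison[rotated])
    show "\<forall>\<^sub>F d in sequentially. norm (?E d (\<lambda>\<omega>. g (?X d \<omega>) * h (?Y d \<omega>))
        - ?E d (\<lambda>\<omega>. g (?X d \<omega>)) * ?E d (\<lambda>\<omega>. h (?Y d \<omega>))) \<le> C * (real d * \<rho>^d)"
      using eventually_ge_at_top[of "1::nat"]
    proof eventually_elim
      case (elim d)
      then show ?case
        using covariance_Phi_std_even_odd_le[OF less_imp_le[OF p(1)] p(2) g'(3,2) h'(3), of d]
        unfolding covariance_bound_geometric[OF p elim] C_def \<rho>_def by simp
    qed
  qed
  moreover have "(\<lambda>d. ?E d (\<lambda>\<omega>. g (?X d \<omega>)) * ?E d (\<lambda>\<omega>. h (?Y d \<omega>)))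
      \<longlonglongrightarrow> integral\<^sup>L std_normal_distribution g * integral\<^sup>L std_normal_distribution h"
    using tendsto_expectation_Phi_std[OF p _ continuous_on_bounded_lipschitz[OF g] g'(1),
        of "\<lambda>d. even_vertices d"]
      tendsto_expectation_Phi_std[OF p _ continuous_on_bounded_lipschitz[OF h] h'(1),
        of "\<lambda>d. odd_vertices d"]
    by (intro tendsto_mult) simp_all
  ultimately show ?thesis by (rule Lim_transform[rotated])
qed

section \<open>Convergence in distribution in the plane\<close>

lemma bounded_lipschitz_const: "bounded_lipschitz (\<lambda>_. c)"
  unfolding bounded_lipschitz_def by (intro conjI exI[of _ "\<bar>c\<bar>"] exI[of _ 0]) auto

lemma bounded_lipschitz_diff:
  assumes "bounded_lipschitz g" "bounded_lipschitz h"
  shows "bounded_lipschitz (\<lambda>x. g x - h x)"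
proof -
  obtain B1 L1 where g: "\<And>x. \<bar>g x\<bar> \<le> B1" "0 \<le> L1" "\<And>x y. \<bar>g x - g y\<bar> \<le> L1 * \<bar>x - y\<bar>"
    using assms(1) by (rule bounded_lipschitzE) blast
  obtain B2 L2 where h: "\<And>x. \<bar>h x\<bar> \<le> B2" "0 \<le> L2" "\<And>x y. \<bar>h x - h y\<bar> \<le> L2 * \<bar>x - y\<bar>"
    using assms(2) by (rule bounded_lipschitzE) blast
  have "\<bar>g x - h x\<bar> \<le> B1 + B2" for x
    using abs_triangle_ineq4[of "g x" "h x"] g(1)[of x] h(1)[of x] by linarith
  moreover have "\<bar>(g x - h x) - (g y - h y)\<bar> \<le> (L1 + L2) * \<bar>x - y\<bar>" for x y
  proof -
    have "(g x - h x) - (g y - h y) = (g x - g y) - (h x - h y)" by simp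
    then have "\<bar>(g x - h x) - (g y - h y)\<bar> \<le> \<bar>g x - g y\<bar> + \<bar>h x - h y\<bar>"
      using abs_triangle_ineq4 by metis
    then show ?thesis using g(3)[of x y] h(3)[of x y] by (simp add: distrib_right)
  qed
  ultimately show ?thesis
    unfolding bounded_lipschitz_def using g(2) h(2)
    by (intro conjI exI[of _ "B1 + B2"] exI[of _ "L1 + L2"]) auto
qed

lemma bounded_lipschitz_mult:
  assumes "bounded_lipschitz g" "bounded_lipschitz h"
  shows "bounded_lipschitz (\<lambda>x. g x * h x)"
proof -
  obtain B1 L1 where g: "\<And>x. \<bar>g x\<bar> \<le> B1" "0 \<le> L1" "\<And>x y. \<bar>g x - g y\<bar> \<le> L1 * \<bar>x - y\<bar>"
    using assms(1) by (rule bounded_lipschitzE) blast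
  obtain B2 L2 where h: "\<And>x. \<bar>h x\<bar> \<le> B2" "0 \<le> L2" "\<And>x y. \<bar>h x - h y\<bar> \<le> L2 * \<bar>x - y\<bar>"
    using assms(2) by (rule bounded_lipschitzE) blast
  have B: "0 \<le> B1" "0 \<le> B2" using g(1)[of 0] h(1)[of 0] by auto
  have "\<bar>g x * h x\<bar> \<le> B1 * B2" for x
    unfolding abs_mult by (intro mult_mono g(1) h(1)) (auto simp: B)
  moreover have "\<bar>g x * h x - g y * h y\<bar> \<le> (B1 * L2 + B2 * L1) * \<bar>x - y\<bar>" for x y
  proof -
    have "g x * h x - g y * h y = g x * (h x - h y) + h y * (g x - g y)" by (simp add: algebra_simps)
    then have "\<bar>g x * h x - g y * h y\<bar> \<le> \<bar>g x\<bar> * \<bar>h x - h y\<bar> + \<bar>h y\<bar> * \<bar>g x - g y\<bar>"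
      by (simp add: abs_mult[symmetric] abs_triangle_ineq)
    also have "\<dots> \<le> B1 * (L2 * \<bar>x - y\<bar>) + B2 * (L1 * \<bar>x - y\<bar>)"
      by (intro add_mono mult_mono g h) (auto simp: B)
    finally show ?thesis by (simp add: algebra_simps)
  qed
  ultimately show ?thesis
    unfolding bounded_lipschitz_def using g(2) h(2) B
    by (intro conjI exI[of _ "B1 * B2"] exI[of _ "B1 * L2 + B2 * L1"]) auto
qed

lemma abs_max_diff_le: "\<bar>max (c::real) a - max c b\<bar> \<le> \<bar>a - b\<bar>"
  by (cases "a \<le> c"; cases "b \<le> c") (auto simp: max_def)

lemma abs_min_diff_le: "\<bar>min (c::real) a - min c b\<bar> \<le> \<bar>a - b\<bar>"
  by (cases "a \<le> c"; cases "b \<le> c") (auto simp: min_def)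

lemma bounded_lipschitz_clamp: "bounded_lipschitz (\<lambda>x. max (- K) (min K x))"
  unfolding bounded_lipschitz_def
proof (intro conjI)
  show "\<exists>B. \<forall>x. \<bar>max (- K) (min K x)\<bar> \<le> B" by (intro exI[of _ "\<bar>K\<bar>"]) auto
  have "\<bar>max (- K) (min K x) - max (- K) (min K y)\<bar> \<le> \<bar>x - y\<bar>" for x y
    by (rule order_trans[OF abs_max_diff_le abs_min_diff_le])
  then show "\<exists>L\<ge>0. \<forall>x y. \<bar>max (- K) (min K x) - max (- K) (min K y)\<bar> \<le> L * \<bar>x - y\<bar>"
    by (intro exI[of _ 1]) simp
qed

definition cutoff :: "real \<Rightarrow> real \<Rightarrow> real" where
  "cutoff K x = max 0 (min 1 (K + 1 - \<bar>x\<bar>))"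

lemma cutoff_nonneg: "0 \<le> cutoff K x"
  and cutoff_le_1: "cutoff K x \<le> 1"
  by (auto simp: cutoff_def)

lemma cutoff_eq_1: "\<bar>x\<bar> \<le> K \<Longrightarrow> cutoff K x = 1"
  by (auto simp: cutoff_def)

lemma cutoff_eq_0: "K + 1 \<le> \<bar>x\<bar> \<Longrightarrow> cutoff K x = 0"
  by (auto simp: cutoff_def)

lemma bounded_lipschitz_cutoff: "bounded_lipschitz (cutoff K)"
  unfolding bounded_lipschitz_def
proof (intro conjI)
  show "\<exists>B. \<forall>x. \<bar>cutoff K x\<bar> \<le> B"
    using cutoff_nonneg cutoff_le_1 by (intro exI[of _ 1]) auto
  have "\<bar>cutoff K x - cutoff K y\<bar> \<le> \<bar>x - y\<bar>" for x y
  proof -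
    have "\<bar>cutoff K x - cutoff K y\<bar> \<le> \<bar>(K + 1 - \<bar>x\<bar>) - (K + 1 - \<bar>y\<bar>)\<bar>"
      unfolding cutoff_def by (rule order_trans[OF abs_max_diff_le abs_min_diff_le])
    also have "(K + 1 - \<bar>x\<bar>) - (K + 1 - \<bar>y\<bar>) = \<bar>y\<bar> - \<bar>x\<bar>" by simp
    also have "\<bar>\<bar>y\<bar> - \<bar>x\<bar>\<bar> \<le> \<bar>x - y\<bar>" by (metis abs_minus_commute abs_triangle_ineq3)
    finally show ?thesis .
  qed
  then show "\<exists>L\<ge>0. \<forall>x y. \<bar>cutoff K x - cutoff K y\<bar> \<le> L * \<bar>x - y\<bar>" by (intro exI[of _ 1]) simp
qed

lemma one_minus_cutoff_le: "0 < K \<Longrightarrow> 1 - cutoff K x \<le> x^2 / K^2"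
proof (cases "\<bar>x\<bar> \<le> K")
  case False
  assume K: "0 < K"
  with False have "K^2 \<le> x^2" by (simp add: abs_le_square_iff[symmetric])
  then have "1 \<le> x^2 / K^2" using K by simp
  then show ?thesis using cutoff_nonneg[of K x] by linarith
qed (simp add: cutoff_eq_1)

inductive_set tensor_sums :: "(real \<times> real \<Rightarrow> real) set" where
  zero: "(\<lambda>_. 0) \<in> tensor_sums"
| add_tensor: "bounded_lipschitz g \<Longrightarrow> bounded_lipschitz h \<Longrightarrow> F \<in> tensor_sums \<Longrightarrow>
    (\<lambda>z. g (fst z) * h (snd z) + F z) \<in> tensor_sums"

lemma tensor_in_tensor_sums:
  "bounded_lipschitz g \<Longrightarrow> bounded_lipschitz h \<Longrightarrow> (\<lambda>z. g (fst z) * h (snd z)) \<in> tensor_sums"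
  using tensor_sums.add_tensor[OF _ _ tensor_sums.zero] by simp

lemma tensor_sums_add: "F \<in> tensor_sums \<Longrightarrow> G \<in> tensor_sums \<Longrightarrow> (\<lambda>z. F z + G z) \<in> tensor_sums"
proof (induction rule: tensor_sums.induct)
  case zero
  then show ?case by simp
next
  case (add_tensor g h F)
  then show ?case using tensor_sums.add_tensor[of g h "\<lambda>z. F z + G z"] by (simp add: add.assoc)
qed

lemma tensor_mult_tensor_sums:
  assumes "bounded_lipschitz g" "bounded_lipschitz h"
  shows "G \<in> tensor_sums \<Longrightarrow> (\<lambda>z. g (fst z) * h (snd z) * G z) \<in> tensor_sums"
proof (induction rule: tensor_sums.induct)
  case zero
  then show ?case using tensor_sums.zero by simp
next
  case (add_tensor g' h' G)
  have "bounded_lipschitz (\<lambda>x. g x * g' x)" "bounded_lipschitz (\<lambda>y. h y * h' y)"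
    using assms add_tensor.hyps by (simp_all add: bounded_lipschitz_mult)
  from tensor_sums.add_tensor[OF this add_tensor.IH]
  show ?case by (simp add: algebra_simps)
qed

lemma tensor_sums_mult: "F \<in> tensor_sums \<Longrightarrow> G \<in> tensor_sums \<Longrightarrow> (\<lambda>z. F z * G z) \<in> tensor_sums"
proof (induction rule: tensor_sums.induct)
  case zero
  then show ?case using tensor_sums.zero by simp
next
  case (add_tensor g h F)
  have "(\<lambda>z. g (fst z) * h (snd z) * G z + F z * G z) \<in> tensor_sums"
    using tensor_sums_add[OF tensor_mult_tensor_sums[OF add_tensor.hyps(1,2) add_tensor.prems]
        add_tensor.IH[OF add_tensor.prems]] .
  then show ?case by (simp add: distrib_right)
qed

lemma continuous_on_tensor_sums: "F \<in> tensor_sums \<Longrightarrow> continuous_on UNIV F"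
proof (induction rule: tensor_sums.induct)
  case (add_tensor g h F)
  have "continuous_on UNIV (\<lambda>z::real \<times> real. g (fst z))"
    by (rule continuous_on_compose2[OF continuous_on_bounded_lipschitz[OF add_tensor.hyps(1)]
          continuous_on_fst[OF continuous_on_id]]) auto
  moreover have "continuous_on UNIV (\<lambda>z::real \<times> real. h (snd z))"
    by (rule continuous_on_compose2[OF continuous_on_bounded_lipschitz[OF add_tensor.hyps(2)]
          continuous_on_snd[OF continuous_on_id]]) auto
  ultimately show ?case using add_tensor.IH by (intro continuous_intros)
qed simp

lemma bounded_tensor_sums: "F \<in> tensor_sums \<Longrightarrow> \<exists>B. \<forall>z. \<bar>F z\<bar> \<le> B"
proof (induction rule: tensor_sums.induct)
  case (add_tensor g h F)
  obtain B1 where g: "\<And>x. \<bar>g x\<bar> \<le> B1"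
    using add_tensor.hyps(1) unfolding bounded_lipschitz_def by blast
  obtain B2 where h: "\<And>x. \<bar>h x\<bar> \<le> B2"
    using add_tensor.hyps(2) unfolding bounded_lipschitz_def by blast
  have B1: "0 \<le> B1" using g[of 0] abs_ge_zero[of "g 0"] by linarith
  obtain B where F: "\<And>z. \<bar>F z\<bar> \<le> B" using add_tensor.IH by blast
  have "\<bar>g (fst z) * h (snd z) + F z\<bar> \<le> B1 * B2 + B" for z
  proof -
    have "\<bar>g (fst z) * h (snd z)\<bar> \<le> B1 * B2"
      unfolding abs_mult using g h B1 by (intro mult_mono) auto
    then show ?thesis using F[of z] abs_triangle_ineq[of "g (fst z) * h (snd z)" "F z"] by linarith
  qed
  then show ?case by blast
qed (intro exI[of _ 0], simp)

lemma tensor_sums_uniform_approx: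
  fixes f :: "real \<times> real \<Rightarrow> real"
  assumes f: "continuous_on UNIV f" and e: "0 < e"
  obtains F where "F \<in> tensor_sums" "\<And>z. z \<in> {-K..K} \<times> {-K..K} \<Longrightarrow> \<bar>f z - F z\<bar> < e"
proof -
  let ?S = "{-K..K} \<times> {-K..K}"
  interpret function_ring_on tensor_sums ?S
  proof
    show "compact ?S" by (intro compact_Times compact_Icc)
  next
    fix F assume "F \<in> tensor_sums"
    then show "continuous_on ?S F" by (rule continuous_on_subset[OF continuous_on_tensor_sums]) simp
  next
    fix F G assume "F \<in> tensor_sums" "G \<in> tensor_sums"
    then show "(\<lambda>x. F x + G x) \<in> tensor_sums" "(\<lambda>x. F x * G x) \<in> tensor_sums"
      by (simp_all add: tensor_sums_add tensor_sums_mult)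
  next
    fix c :: real
    show "(\<lambda>_. c) \<in> tensor_sums"
      using tensor_in_tensor_sums[OF bounded_lipschitz_const bounded_lipschitz_const, of c 1] by simp
  next
    fix x y assume xy: "x \<in> ?S" "y \<in> ?S" "x \<noteq> y"
    let ?clamp = "\<lambda>t. max (- K) (min K t)"
    have clamp: "?clamp t = t" if "t \<in> {-K..K}" for t using that by auto
    show "\<exists>F\<in>tensor_sums. F x \<noteq> F y"
    proof (cases "fst x = fst y")
      case True
      then have "?clamp (snd x) \<noteq> ?clamp (snd y)"
        using xy by (auto simp: clamp mem_Times_iff prod_eq_iff)
      with tensor_in_tensor_sums[OF bounded_lipschitz_const bounded_lipschitz_clamp, of 1 K]
      show ?thesis by (intro bexI) auto
    next
      case False
      then have "?clamp (fst x) \<noteq> ?clamp (fst y)"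
        using xy by (auto simp: clamp mem_Times_iff)
      with tensor_in_tensor_sums[OF bounded_lipschitz_clamp bounded_lipschitz_const, of K 1]
      show ?thesis by (intro bexI) auto
    qed
  qed
  obtain F where F: "F \<in> UNIV \<rightarrow> tensor_sums" "uniform_limit ?S F f sequentially"
    using Stone_Weierstrass[OF continuous_on_subset[OF f]] by blast
  have "\<forall>\<^sub>F n in sequentially. \<forall>z\<in>?S. dist (F n z) (f z) < e"
    by (rule uniform_limitD[OF F(2) e])
  then obtain n where "\<forall>z\<in>?S. dist (F n z) (f z) < e"
    by (auto simp: eventually_sequentially)
  then show ?thesis using F(1) that[of "F n"] by (auto simp: dist_real_def abs_minus_commute)
qed

definition cutoff_tail :: "real \<Rightarrow> real \<times> real \<Rightarrow> real" where
  "cutoff_tail K z = (1 - cutoff K (fst z)) + (1 - cutoff K (snd z))"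

lemma abs_cutoff_tail_le: "\<bar>cutoff_tail K z\<bar> \<le> 2"
proof -
  have "0 \<le> cutoff_tail K z" "cutoff_tail K z \<le> 2"
    using cutoff_nonneg[of K "fst z"] cutoff_le_1[of K "fst z"]
      cutoff_nonneg[of K "snd z"] cutoff_le_1[of K "snd z"] by (simp_all add: cutoff_tail_def)
  then show ?thesis by simp
qed

lemma cutoff_tail_in_tensor_sums: "cutoff_tail K \<in> tensor_sums"
proof -
  have t: "bounded_lipschitz (\<lambda>x. 1 - cutoff K x)"
    by (intro bounded_lipschitz_diff bounded_lipschitz_const bounded_lipschitz_cutoff)
  have "cutoff_tail K = (\<lambda>z. (1 - cutoff K (fst z)) * 1 + 1 * (1 - cutoff K (snd z)))"
    by (simp add: cutoff_tail_def fun_eq_iff)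
  also have "\<dots> \<in> tensor_sums"
    by (rule tensor_sums_add[OF tensor_in_tensor_sums[OF t bounded_lipschitz_const[of 1]]
          tensor_in_tensor_sums[OF bounded_lipschitz_const[of 1] t]])
  finally show ?thesis .
qed

lemma tensor_sums_approx_cutoff:
  fixes f :: "real \<times> real \<Rightarrow> real"
  assumes f: "continuous_on UNIV f" "\<And>z. \<bar>f z\<bar> \<le> B" and e: "0 < e"
  obtains G where "G \<in> tensor_sums" "\<And>z. \<bar>f z - G z\<bar> \<le> e + B * cutoff_tail K z"
proof -
  let ?\<psi> = "\<lambda>z. cutoff K (fst z) * cutoff K (snd z)"
  obtain F where F: "F \<in> tensor_sums" "\<And>z. z \<in> {-(K+1)..K+1} \<times> {-(K+1)..K+1} \<Longrightarrow> \<bar>f z - F z\<bar> < e"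
    using tensor_sums_uniform_approx[OF f(1) e] by blast
  have "(\<lambda>z. F z * ?\<psi> z) \<in> tensor_sums"
    using tensor_sums_mult[OF F(1) tensor_in_tensor_sums[OF bounded_lipschitz_cutoff bounded_lipschitz_cutoff]] .
  moreover have "\<bar>f z - F z * ?\<psi> z\<bar> \<le> e + B * cutoff_tail K z" for z
  proof -
    have \<psi>: "0 \<le> ?\<psi> z" "?\<psi> z \<le> 1"
      by (simp_all add: cutoff_nonneg cutoff_le_1 mult_le_one)
    have "\<bar>(f z - F z) * ?\<psi> z\<bar> \<le> e"
    proof (cases "z \<in> {-(K+1)..K+1} \<times> {-(K+1)..K+1}")
      case True
      then have "\<bar>f z - F z\<bar> * \<bar>?\<psi> z\<bar> \<le> e * 1"
        using F(2)[of z] \<psi> e by (intro mult_mono) auto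
      then show ?thesis by (simp add: abs_mult)
    next
      case False
      then have "K + 1 \<le> \<bar>fst z\<bar> \<or> K + 1 \<le> \<bar>snd z\<bar>" by (auto simp: mem_Times_iff abs_le_iff)
      then have "?\<psi> z = 0" by (auto simp: cutoff_eq_0)
      then show ?thesis using e by (metis abs_zero less_imp_le mult_zero_right)
    qed
    moreover have "\<bar>f z * (1 - ?\<psi> z)\<bar> \<le> B * ((1 - cutoff K (fst z)) + (1 - cutoff K (snd z)))"
    proof -
      have "\<bar>f z * (1 - ?\<psi> z)\<bar> = \<bar>f z\<bar> * (1 - ?\<psi> z)" using \<psi> by (simp add: abs_mult)
      also have "\<dots> \<le> B * (1 - ?\<psi> z)" using f(2)[of z] \<psi> by (intro mult_right_mono) auto
      also have "1 - ?\<psi> z \<le> (1 - cutoff K (fst z)) + (1 - cutoff K (snd z))"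
        using mult_nonneg_nonneg[of "1 - cutoff K (fst z)" "1 - cutoff K (snd z)"]
        by (simp add: cutoff_le_1 algebra_simps)
      then have "B * (1 - ?\<psi> z) \<le> B * ((1 - cutoff K (fst z)) + (1 - cutoff K (snd z)))"
        using f(2)[of z] abs_ge_zero[of "f z"] by (intro mult_left_mono) linarith+
      finally show ?thesis .
    qed
    moreover have "f z - F z * ?\<psi> z = (f z - F z) * ?\<psi> z + f z * (1 - ?\<psi> z)"
      by (simp add: algebra_simps)
    ultimately show ?thesis unfolding cutoff_tail_def by (smt (verit) abs_triangle_ineq)
  qed
  ultimately show ?thesis by (rule that)
qed

interpretation std_normal_pair: pair_prob_space std_normal_distribution std_normal_distribution
  unfolding pair_prob_space_def pair_sigma_finite_def
  using prob_space_normal_density by (auto intro: prob_space_imp_sigma_finite)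

lemma prob_space_std_normal2: "prob_space std_normal2"
  unfolding std_normal2_def by (rule std_normal_pair.prob_space_axioms)

lemma borel_measurable_std_normal2:
  "continuous_on UNIV F \<Longrightarrow> F \<in> borel_measurable std_normal2"
proof -
  have "sets std_normal2 = sets (borel \<Otimes>\<^sub>M borel :: (real \<times> real) measure)"
    unfolding std_normal2_def by (rule sets_pair_measure_cong) simp_all
  then have "sets std_normal2 = sets borel" by (simp only: borel_prod)
  then show "continuous_on UNIV F \<Longrightarrow> F \<in> borel_measurable std_normal2"
    using measurable_cong_sets borel_measurable_continuous_onI by blast
qed

lemma integrable_std_normal2:
  fixes F :: "real \<times> real \<Rightarrow> real"
  shows "continuous_on UNIV F \<Longrightarrow> (\<And>z. \<bar>F z\<bar> \<le> B) \<Longrightarrow> integrable std_normal2 F"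
  unfolding std_normal2_def
  by (rule std_normal_pair.integrable_const_bound[where B=B])
    (auto simp: borel_measurable_std_normal2[unfolded std_normal2_def])

lemma integral_std_normal2_tensor:
  fixes g h :: "real \<Rightarrow> real"
  assumes g: "continuous_on UNIV g" "\<And>x. \<bar>g x\<bar> \<le> B1"
    and h: "continuous_on UNIV h" "\<And>x. \<bar>h x\<bar> \<le> B2"
  shows "integral\<^sup>L std_normal2 (\<lambda>z. g (fst z) * h (snd z))
     = integral\<^sup>L std_normal_distribution g * integral\<^sup>L std_normal_distribution h"
proof -
  have "continuous_on UNIV (\<lambda>z::real \<times> real. g (fst z))"
    by (rule continuous_on_compose2[OF g(1) continuous_on_fst[OF continuous_on_id]]) auto
  moreover have "continuous_on UNIV (\<lambda>z::real \<times> real. h (snd z))"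
    by (rule continuous_on_compose2[OF h(1) continuous_on_snd[OF continuous_on_id]]) auto
  ultimately have cont: "continuous_on UNIV (\<lambda>z::real \<times> real. g (fst z) * h (snd z))"
    by (rule continuous_on_mult)
  have "0 \<le> B1" using g(2)[of 0] abs_ge_zero[of "g 0"] by linarith
  then have "\<bar>g (fst z) * h (snd z)\<bar> \<le> B1 * B2" for z
    unfolding abs_mult by (intro mult_mono g(2) h(2)) auto
  then have "integrable std_normal2 (\<lambda>z. g (fst z) * h (snd z))"
    by (rule integrable_std_normal2[OF cont])
  then show ?thesis
    using std_normal_pair.integral_fst[of "\<lambda>x y. g x * h y"]
    unfolding std_normal2_def by (simp add: case_prod_unfold)
qed

lemma integral_std_normal_one_minus_cutoff_le:
  assumes K: "0 < K"
  shows "integral\<^sup>L std_normal_distribution (\<lambda>x. 1 - cutoff K x) \<le> 1 / K^2"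
proof -
  have moment: "integrable std_normal_distribution (\<lambda>x. x^2)"
    "integral\<^sup>L std_normal_distribution (\<lambda>x. x^2) = 1"
    using std_normal_distribution_even_moments[of 1] by simp_all
  have "continuous_on UNIV (\<lambda>x. 1 - cutoff K x)"
    by (intro continuous_intros continuous_on_bounded_lipschitz[OF bounded_lipschitz_cutoff])
  then have "integrable std_normal_distribution (\<lambda>x. 1 - cutoff K x)"
    using cutoff_nonneg[of K] cutoff_le_1[of K]
    by (intro std_normal_pair.M1.integrable_const_bound[where B=1])
      (auto intro: borel_measurable_continuous_onI)
  then have "integral\<^sup>L std_normal_distribution (\<lambda>x. 1 - cutoff K x)
      \<le> integral\<^sup>L std_normal_distribution (\<lambda>x. x^2 / K^2)"
    using moment(1) by (intro integral_mono one_minus_cutoff_le[OF K]) simp_all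
  also have "\<dots> = 1 / K^2" using moment by simp
  finally show ?thesis .
qed

lemma integral_std_normal2_cutoff_tail_le:
  assumes K: "0 < K"
  shows "integral\<^sup>L std_normal2 (cutoff_tail K) \<le> 2 / K^2"
proof -
  let ?t = "\<lambda>x. 1 - cutoff K x"
  have t: "continuous_on UNIV ?t" "\<And>x. \<bar>?t x\<bar> \<le> 1"
    using cutoff_nonneg[of K] cutoff_le_1[of K]
    by (auto intro!: continuous_intros continuous_on_bounded_lipschitz[OF bounded_lipschitz_cutoff])
  have t1: "\<bar>?t (fst z) * 1\<bar> \<le> 1" "\<bar>1 * ?t (snd z)\<bar> \<le> 1" for z
    using t(2) by simp_all
  have "continuous_on UNIV (\<lambda>z::real \<times> real. ?t (fst z) * 1)"
    "continuous_on UNIV (\<lambda>z::real \<times> real. 1 * ?t (snd z))"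
    by (intro continuous_intros continuous_on_compose2[OF t(1)]; simp)+
  then have "integral\<^sup>L std_normal2 (\<lambda>z. ?t (fst z) * 1 + 1 * ?t (snd z))
      = integral\<^sup>L std_normal2 (\<lambda>z. ?t (fst z) * 1) + integral\<^sup>L std_normal2 (\<lambda>z. 1 * ?t (snd z))"
    using integrable_std_normal2[OF _ t1(1)] integrable_std_normal2[OF _ t1(2)]
    by (intro Bochner_Integration.integral_add) auto
  moreover have "cutoff_tail K = (\<lambda>z. ?t (fst z) * 1 + 1 * ?t (snd z))"
    by (simp add: cutoff_tail_def fun_eq_iff)
  ultimately have "integral\<^sup>L std_normal2 (cutoff_tail K)
      = integral\<^sup>L std_normal2 (\<lambda>z. ?t (fst z) * 1) + integral\<^sup>L std_normal2 (\<lambda>z. 1 * ?t (snd z))"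
    by simp
  also have "\<dots> = 2 * integral\<^sup>L std_normal_distribution ?t"
    using integral_std_normal2_tensor[OF t continuous_on_const, of 1 1]
      integral_std_normal2_tensor[OF continuous_on_const _ t, of 1 1]
      std_normal_pair.M1.prob_space
    by simp
  also have "\<dots> \<le> 2 / K^2"
    using integral_std_normal_one_minus_cutoff_le[OF K] by simp
  finally show ?thesis .
qed

lemma integrable_measure_pmf_bounded:
  fixes f :: "'a \<Rightarrow> real"
  shows "(\<And>x. \<bar>f x\<bar> \<le> B) \<Longrightarrow> integrable (measure_pmf M) f"
  by (rule measure_pmf.integrable_const_bound[where B=B]) auto

lemma tendsto_expectation_tensor_sums:
  fixes M :: "nat \<Rightarrow> (real \<times> real) pmf"
  assumes products: "\<And>g h. bounded_lipschitz g \<Longrightarrow> bounded_lipschitz h \<Longrightarrow>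
      (\<lambda>n. measure_pmf.expectation (M n) (\<lambda>z. g (fst z) * h (snd z)))
        \<longlonglongrightarrow> integral\<^sup>L std_normal_distribution g * integral\<^sup>L std_normal_distribution h"
  shows "F \<in> tensor_sums \<Longrightarrow>
    (\<lambda>n. measure_pmf.expectation (M n) F) \<longlonglongrightarrow> integral\<^sup>L std_normal2 F"
proof (induction rule: tensor_sums.induct)
  case (add_tensor g h F)
  obtain B1 L1 where g: "\<And>x. \<bar>g x\<bar> \<le> B1"
    using add_tensor.hyps(1) by (rule bounded_lipschitzE) blast
  obtain B2 L2 where h: "\<And>x. \<bar>h x\<bar> \<le> B2"
    using add_tensor.hyps(2) by (rule bounded_lipschitzE) blast
  obtain B where F: "\<And>z. \<bar>F z\<bar> \<le> B" using bounded_tensor_sums[OF add_tensor.hyps(3)] by blast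
  have "0 \<le> B1" using g[of 0] abs_ge_zero[of "g 0"] by linarith
  then have gh: "\<bar>g (fst z) * h (snd z)\<bar> \<le> B1 * B2" for z
    unfolding abs_mult by (intro mult_mono g h) auto
  have "(\<lambda>n. measure_pmf.expectation (M n) (\<lambda>z. g (fst z) * h (snd z))
      + measure_pmf.expectation (M n) F)
    \<longlonglongrightarrow> integral\<^sup>L std_normal2 (\<lambda>z. g (fst z) * h (snd z)) + integral\<^sup>L std_normal2 F"
    using products[OF add_tensor.hyps(1,2)] add_tensor.IH
      integral_std_normal2_tensor[OF continuous_on_bounded_lipschitz[OF add_tensor.hyps(1)] g
        continuous_on_bounded_lipschitz[OF add_tensor.hyps(2)] h]
    by (intro tendsto_add) simp_all
  moreover have "integrable std_normal2 (\<lambda>z. g (fst z) * h (snd z))"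
    by (rule integrable_std_normal2[OF continuous_on_tensor_sums[OF
          tensor_in_tensor_sums[OF add_tensor.hyps(1,2)]] gh])
  moreover have "integrable std_normal2 F"
    by (rule integrable_std_normal2[OF continuous_on_tensor_sums[OF add_tensor.hyps(3)] F])
  moreover have "integrable (measure_pmf (M n)) (\<lambda>z. g (fst z) * h (snd z))"
    "integrable (measure_pmf (M n)) F" for n
    using integrable_measure_pmf_bounded[OF gh] integrable_measure_pmf_bounded[OF F] .
  ultimately show ?case by simp
qed simp

lemma (in prob_space) abs_integral_diff_le:
  fixes f g c :: "'a \<Rightarrow> real"
  assumes "integrable M f" "integrable M g" "integrable M c" "\<And>x. \<bar>f x - g x\<bar> \<le> e + B * c x"
  shows "\<bar>integral\<^sup>L M f - integral\<^sup>L M g\<bar> \<le> e + B * integral\<^sup>L M c"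
proof -
  have "\<bar>integral\<^sup>L M f - integral\<^sup>L M g\<bar> = \<bar>integral\<^sup>L M (\<lambda>x. f x - g x)\<bar>"
    using assms by simp
  also have "\<dots> \<le> integral\<^sup>L M (\<lambda>x. \<bar>f x - g x\<bar>)"
    by (rule integral_abs_bound)
  also have "\<dots> \<le> integral\<^sup>L M (\<lambda>x. e + B * c x)"
    using assms by (intro integral_mono) auto
  also have "\<dots> = e + B * integral\<^sup>L M c"
    using assms by (simp add: prob_space)
  finally show ?thesis .
qed

lemma tendsto_if_eventually_close:
  fixes a :: "nat \<Rightarrow> real"
  assumes "0 < C" and "\<And>e. 0 < e \<Longrightarrow> eventually (\<lambda>n. \<bar>a n - A\<bar> \<le> C * e) sequentially"
  shows "a \<longlonglongrightarrow> A"
proof (rule tendstoI)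
  fix e :: real assume e: "0 < e"
  have "eventually (\<lambda>n. \<bar>a n - A\<bar> \<le> C * (e / (2 * C))) sequentially"
    by (intro assms(2)) (use assms(1) e in simp)
  then show "eventually (\<lambda>n. dist (a n) A < e) sequentially"
    by eventually_elim (use assms e in \<open>auto simp: dist_real_def\<close>)
qed

lemma conv_distr2_std_normal2I:
  fixes M :: "nat \<Rightarrow> (real \<times> real) pmf"
  assumes products: "\<And>g h. bounded_lipschitz g \<Longrightarrow> bounded_lipschitz h \<Longrightarrow>
      (\<lambda>n. measure_pmf.expectation (M n) (\<lambda>z. g (fst z) * h (snd z)))
        \<longlonglongrightarrow> integral\<^sup>L std_normal_distribution g * integral\<^sup>L std_normal_distribution h"
  shows "conv_distr2 (\<lambda>n. measure_pmf (M n)) std_normal2"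
  unfolding conv_distr2_def
proof (intro allI impI)
  fix f :: "real \<times> real \<Rightarrow> real"
  assume "continuous_on UNIV f \<and> bounded (range f)"
  then obtain B where f: "continuous_on UNIV f" and B: "0 < B" "\<And>z. \<bar>f z\<bar> \<le> B"
    unfolding bounded_pos by auto
  have tensor_sums_limit: "(\<lambda>n. measure_pmf.expectation (M n) F) \<longlonglongrightarrow> integral\<^sup>L std_normal2 F"
    if "F \<in> tensor_sums" for F
    using products that by (rule tendsto_expectation_tensor_sums)
  show "(\<lambda>n. measure_pmf.expectation (M n) f) \<longlonglongrightarrow> integral\<^sup>L std_normal2 f"
  proof (rule tendsto_if_eventually_close)
    show "0 < 3 + 5 * B" using B by simp
  next
    fix e :: real assume e: "0 < e"
    define K where "K = sqrt (1 / e)"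
    have K: "0 < K" "1 / K^2 = e" using e by (simp_all add: K_def)
    obtain G where G: "G \<in> tensor_sums" "\<And>z. \<bar>f z - G z\<bar> \<le> e + B * cutoff_tail K z"
      using tensor_sums_approx_cutoff[OF f B(2) e] by blast
        have tail_limit: "integral\<^sup>L std_normal2 (cutoff_tail K) \<le> 2 * e"
      using integral_std_normal2_cutoff_tail_le[OF K(1)] K(2) by simp
    obtain BG where BG: "\<And>z. \<bar>G z\<bar> \<le> BG" using bounded_tensor_sums[OF G(1)] by blast
    have "\<bar>integral\<^sup>L std_normal2 f - integral\<^sup>L std_normal2 G\<bar> \<le> e + B * integral\<^sup>L std_normal2 (cutoff_tail K)"
      by (rule prob_space.abs_integral_diff_le[OF prob_space_std_normal2
          integrable_std_normal2[OF f B(2)]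
          integrable_std_normal2[OF continuous_on_tensor_sums[OF G(1)] BG]
          integrable_std_normal2[OF continuous_on_tensor_sums[OF cutoff_tail_in_tensor_sums] abs_cutoff_tail_le] G(2)])
    then have limit_approx: "\<bar>integral\<^sup>L std_normal2 f - integral\<^sup>L std_normal2 G\<bar> \<le> e + B * (2 * e)"
      using mult_left_mono[OF tail_limit less_imp_le[OF B(1)]] by linarith
    have "eventually (\<lambda>n. measure_pmf.expectation (M n) (cutoff_tail K) < 3 * e) sequentially"
      using tensor_sums_limit[OF cutoff_tail_in_tensor_sums] tail_limit e by (intro order_tendstoD(2)) auto
    moreover have "eventually (\<lambda>n. \<bar>measure_pmf.expectation (M n) G - integral\<^sup>L std_normal2 G\<bar> < e) sequentially"
      using tendstoD[OF tensor_sums_limit[OF G(1)] e] by (simp add: dist_real_def)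
    ultimately show "eventually (\<lambda>n. \<bar>measure_pmf.expectation (M n) f - integral\<^sup>L std_normal2 f\<bar>
        \<le> (3 + 5 * B) * e) sequentially"
    proof eventually_elim
      case (elim n)
      have "\<bar>measure_pmf.expectation (M n) f - measure_pmf.expectation (M n) G\<bar>
          \<le> e + B * measure_pmf.expectation (M n) (cutoff_tail K)"
        by (rule measure_pmf.abs_integral_diff_le[OF integrable_measure_pmf_bounded[OF B(2)]
            integrable_measure_pmf_bounded[OF BG] integrable_measure_pmf_bounded[OF abs_cutoff_tail_le] G(2)])
      also have "\<dots> \<le> e + B * (3 * e)" using elim(1) B(1) by simp
      finally show ?case using elim(2) limit_approx by (simp add: algebra_simps)
    qed
  qed
qed

theorem lemma3p1:
  fixes p :: real
  assumes "0 < p" and "p < 1"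
  shows "conv_distr2
     (\<lambda>d. measure_pmf (map_pmf
        (\<lambda>\<omega>. ((Phi d (even_vertices d) \<omega> - mu_p p d) / sigma_p p d,
               (Phi d (odd_vertices d) \<omega> - mu_p p d) / sigma_p p d))
        (Qdp d p)))
     std_normal2"
proof -
  have "conv_distr2 (\<lambda>d. measure_pmf (map_pmf
      (\<lambda>\<omega>. (Phi_std d p (even_vertices d) \<omega>, Phi_std d p (odd_vertices d) \<omega>)) (Qdp d p))) std_normal2"
  proof (rule conv_distr2_std_normal2I)
    fix g h :: "real \<Rightarrow> real"
    assume "bounded_lipschitz g" "bounded_lipschitz h"
    from tendsto_expectation_even_odd_product[OF assms this]
    show "(\<lambda>d. measure_pmf.expectation (map_pmf
        (\<lambda>\<omega>. (Phi_std d p (even_vertices d) \<omega>, Phi_std d p (odd_vertices d) \<omega>)) (Qdp d p))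
          (\<lambda>z. g (fst z) * h (snd z)))
      \<longlonglongrightarrow> integral\<^sup>L std_normal_distribution g * integral\<^sup>L std_normal_distribution h"
      by simp
  qed
  then show ?thesis by (simp add: Phi_std_def)
qed

end
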